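(* Let $\mu,\pi\in\mathcal P(\mathbb R^d)$, let $\nu$ be $\alpha$-strongly log-concave (i.e. $\nabla^2f\succeq\alpha I$, $\alpha>0$), and suppose $f$ satisfies conditions (a)–(b) below with constant $L$. Let $T>0$, $h\ge0$ with $LT^2\le\frac1{20}$. Then for every integer $k\ge0$, \[ W_\psi(\mu\tilde{\mathrm P}_{T,h}^k,\pi\tilde{\mathrm P}_{T,h}^k)\le\Big(1-\frac{\alpha T^2}{10}\Big)^kW_\psi(\mu,\pi). \]
   Context: Let $f:\mathbb R^d\to\mathbb R$, $\nu$ the probability measure with density proportional to $e^{-f}$. Conditions: (a) $f$ has global minimum at $0$, $f(0)=0$; (b) $f\in C^2$, $\|\nabla^2f(x)\|_{op}\le L$ for all $x$. For $h>0$ with $T/h\in\mathbb N$ (always assumed), $\tilde q_{T,h}(x,v)=x_N$, $N=T/h$, where $x_0=x,v_0=v$, $x_{j+1}=x_j+hv_j-\frac{h^2}2\nabla f(x_j)$, $v_{j+1}=v_j-\frac h2(\nabla f(x_j)+\nabla f(x_{j+1}))$; for $h=0$, $\tilde q_{T,0}(x,v)$ is the time-$T$ position of the solution of $\dot x=v,\dot v=-\nabla f(x)$ from $(x,v)$. $\tilde{\mathrm P}_{T,h}$ maps $\rho$ to the law of $\tilde q_{T,h}(X,\xi)$, $X\sim\rho$, $\xi\sim\mathcal N(0,I_d)$ independent; $\tilde{\mathrm P}^k_{T,h}$ is the $k$-fold iterate. $\|X\|_\psi=\inf\{\lambda>0:\mathbb E[e^{\|X\|^2/\lambda^2}]\le2\}$;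 $W_\psi(\mu,\pi)=\inf$ of $\|X-Y\|_\psi$ over couplings $(X,Y)$ of $\mu,\pi$. *)

theory Defs
  imports "HOL-Probability.Probability"
begin

definition std_gauss :: "'a::euclidean_space measure" where
  "std_gauss = density lborel
     (\<lambda>v. ennreal ((2 * pi) powr (- real DIM('a) / 2) * exp (- ((norm v)^2) / 2)))"

definition leap_step :: "('a::euclidean_space \<Rightarrow> 'a) \<Rightarrow> real \<Rightarrow> 'a \<times> 'a \<Rightarrow> 'a \<times> 'a" where
  "leap_step grad h z =
     (let x = fst z; v = snd z;
          x' = x + h *\<^sub>R v - (h^2 / 2) *\<^sub>R grad x
      in (x', v - (h / 2) *\<^sub>R (grad x + grad x')))"

definition ham_flow :: "('a::euclidean_space \<Rightarrow> 'a) \<Rightarrow> real \<Rightarrow> 'a \<Rightarrow> 'a \<Rightarrow> 'a" where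
  "ham_flow grad T x v =
     fst ((THE z :: real \<Rightarrow> 'a \<times> 'a. z 0 = (x, v) \<and>
            (\<forall>t. (z has_vector_derivative (snd (z t), - grad (fst (z t)))) (at t))) T)"

definition q_th :: "('a::euclidean_space \<Rightarrow> 'a) \<Rightarrow> real \<Rightarrow> real \<Rightarrow> 'a \<Rightarrow> 'a \<Rightarrow> 'a" where
  "q_th grad T h x v =
     (if h = 0 then ham_flow grad T x v
      else fst ((leap_step grad h ^^ nat \<lfloor>T / h\<rfloor>) (x, v)))"

definition P_th :: "('a::euclidean_space \<Rightarrow> 'a) \<Rightarrow> real \<Rightarrow> real \<Rightarrow> 'a measure \<Rightarrow> 'a measure" where
  "P_th grad T h \<rho> = distr (\<rho> \<Otimes>\<^sub>M std_gauss) borel (\<lambda>(x, v). q_th grad T h x v)"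

definition psi_norm :: "'b measure \<Rightarrow> ('b \<Rightarrow> 'a::real_normed_vector) \<Rightarrow> ereal" where
  "psi_norm M Z = Inf {ereal l | l. l > 0 \<and>
      (\<integral>\<^sup>+ w. ennreal (exp ((norm (Z w))^2 / l^2)) \<partial>M) \<le> 2}"

definition couplings :: "'a::euclidean_space measure \<Rightarrow> 'a measure \<Rightarrow> ('a \<times> 'a) measure set" where
  "couplings \<mu> \<pi> = {\<gamma>. prob_space \<gamma> \<and> sets \<gamma> = sets (borel \<Otimes>\<^sub>M borel) \<and>
      distr \<gamma> borel fst = \<mu> \<and> distr \<gamma> borel snd = \<pi>}"

definition W_psi :: "'a::euclidean_space measure \<Rightarrow> 'a measure \<Rightarrow> ereal" where
  "W_psi \<mu> \<pi> = (INF \<gamma>\<in>couplings \<mu> \<pi>. psi_norm \<gamma> (\<lambda>(x, y). x - y))"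

end

theory Submission
  imports Defs
begin

(* Couple the two chains synchronously: start from a coupling of mu and pi and feed both chains the
   same Gaussian velocity in every step. Then W_psi contracts by the factor 1 - alpha T^2/10 per step
   as soon as x |-> q_{T,h}(x, v) is a contraction with this factor for every fixed v.

   For the latter, let z be the difference of two trajectories with the same initial velocity, w the
   difference of velocities and g the difference of the gradients. Strong convexity and smoothness give
   alpha |z|^2 <= g.z and |g|^2 <= L g.z. For the exact flow, the function
   |z + (T - t) w|^2 + L/3 (T - t)^4 |w|^2 decreases at rate at least (T - t) g.z on [0, T]; for
   leapfrog, the analogous function with remaining time s = T - j h and an additional term
   h^2/4 s^2 |g|^2 decreases by at least 2/5 h (s g_j.z_j + (s - h) g_(j+1).z_(j+1)) in each step.
   Since L T^2 <= 1/20, z moves by at most a small fraction of its size on [0, T], so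
   g.z >= 4/5 alpha |z 0|^2 throughout, and therefore |z T|^2 <= (1 - alpha T^2/5) |z 0|^2.
   The exact flow exists (by Picard iteration) and is unique because the Hamiltonian vector field is
   Lipschitz. *)

section \<open>Smooth strongly convex potentials\<close>

locale smooth_strongly_convex =
  fixes f :: "'a::euclidean_space \<Rightarrow> real" and grad :: "'a \<Rightarrow> 'a"
    and H :: "'a \<Rightarrow> 'a \<Rightarrow>\<^sub>L 'a" and L \<alpha> :: real
  assumes grad: "\<And>x. (f has_derivative (\<lambda>u. grad x \<bullet> u)) (at x)"
    and hess: "\<And>x. (grad has_derivative blinfun_apply (H x)) (at x)"
    and hess_bound: "\<And>x. norm (H x) \<le> L"
    and alpha_pos: "\<alpha> > 0"
    and strong: "\<And>x u. \<alpha> * (norm u)^2 \<le> u \<bullet> blinfun_apply (H x) u"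
begin

lemma alpha_le_L: "\<alpha> \<le> L"
proof -
  obtain u :: 'a where u: "u \<in> Basis" using nonempty_Basis by blast
  then have "\<alpha> = \<alpha> * (norm u)^2" by simp
  also have "\<dots> \<le> u \<bullet> blinfun_apply (H 0) u" by (rule strong)
  also have "\<dots> \<le> norm u * norm (blinfun_apply (H 0) u)" by (rule norm_cauchy_schwarz)
  also have "\<dots> \<le> L"
    using u hess_bound[of 0] norm_blinfun[of "H 0" u] by simp
  finally show ?thesis .
qed

lemma L_pos: "L > 0"
  using alpha_le_L alpha_pos by linarith

lemma grad_lipschitz: "norm (grad x - grad y) \<le> L * norm (x - y)"
  by (rule differentiable_bound[where S=UNIV and f'="\<lambda>x. blinfun_apply (H x)"])
     (auto simp: hess has_derivative_at_withinI norm_blinfun.rep_eq[symmetric] hess_bound)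

lemma isCont_grad: "isCont grad x"
  using has_derivative_continuous[OF hess[of x]] .

lemma has_real_derivative_f_line:
  "((\<lambda>t. f (a + t *\<^sub>R d)) has_real_derivative (grad (a + t *\<^sub>R d) \<bullet> d)) (at t)"
proof -
  have l: "((\<lambda>t. a + t *\<^sub>R d) has_derivative (\<lambda>s. s *\<^sub>R d)) (at t)"
    by (auto intro!: derivative_eq_intros)
  have "((\<lambda>t. f (a + t *\<^sub>R d)) has_derivative (\<lambda>s. grad (a + t *\<^sub>R d) \<bullet> (s *\<^sub>R d))) (at t)"
    using has_derivative_compose[OF l grad] by (simp add: o_def)
  then show ?thesis
    by (simp add: has_field_derivative_def mult.commute[of _ "grad _ \<bullet> d"] fun_eq_iff)
qed

lemma has_real_derivative_grad_line:
  "((\<lambda>t. grad (a + t *\<^sub>R d) \<bullet> d) has_real_derivative (d \<bullet> blinfun_apply (H (a + t *\<^sub>R d)) d)) (at t)"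
proof -
  have l: "((\<lambda>t. a + t *\<^sub>R d) has_derivative (\<lambda>s. s *\<^sub>R d)) (at t)"
    by (auto intro!: derivative_eq_intros)
  have "((\<lambda>t. grad (a + t *\<^sub>R d)) has_derivative
      (\<lambda>s. blinfun_apply (H (a + t *\<^sub>R d)) (s *\<^sub>R d))) (at t)"
    using has_derivative_compose[OF l hess] by (simp add: o_def)
  from has_derivative_inner_left[OF this, of d] show ?thesis
    by (simp add: has_field_derivative_def blinfun.scaleR_right inner_commute
        mult.commute[of _ "d \<bullet> _"])
qed

lemma grad_strongly_monotone: "\<alpha> * (norm (x - y))^2 \<le> (grad x - grad y) \<bullet> (x - y)"
proof -
  obtain \<tau> where
    "grad (y + 1 *\<^sub>R (x - y)) \<bullet> (x - y) - grad (y + 0 *\<^sub>R (x - y)) \<bullet> (x - y)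
       = (1 - 0) * ((x - y) \<bullet> blinfun_apply (H (y + \<tau> *\<^sub>R (x - y))) (x - y))"
    using MVT2[OF _ has_real_derivative_grad_line] by (metis zero_less_one)
  then show ?thesis
    using strong[of "x - y" "y + \<tau> *\<^sub>R (x - y)"] by (simp add: inner_diff_left)
qed

lemma f_ge_tangent: "f a + grad a \<bullet> (b - a) \<le> f b"
proof -
  define d where "d = b - a"
  obtain \<tau> where \<tau>: "0 < \<tau>"
    "f (a + 1 *\<^sub>R d) - f (a + 0 *\<^sub>R d) = (1 - 0) * (grad (a + \<tau> *\<^sub>R d) \<bullet> d)"
    using MVT2[OF _ has_real_derivative_f_line] by (metis zero_less_one)
  have "0 \<le> \<alpha> * (norm (\<tau> *\<^sub>R d))^2"
    using alpha_pos by simp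
  also have "\<dots> \<le> \<tau> * ((grad (a + \<tau> *\<^sub>R d) - grad a) \<bullet> d)"
    using grad_strongly_monotone[of "a + \<tau> *\<^sub>R d" a] by simp
  finally have "0 \<le> (grad (a + \<tau> *\<^sub>R d) - grad a) \<bullet> d"
    using \<tau>(1) by (simp add: zero_le_mult_iff)
  then show ?thesis
    using \<tau>(2) by (simp add: d_def inner_diff_left)
qed

lemma f_le_quadratic_upper: "f b \<le> f a + grad a \<bullet> (b - a) + L / 2 * (norm (b - a))^2"
proof -
  define d where "d = b - a"
  define \<phi> where "\<phi> t = f (a + t *\<^sub>R d) - t * (grad a \<bullet> d) - L * t^2 * (norm d)^2 / 2" for t
  have "\<phi> 1 \<le> \<phi> 0"
  proof (rule DERIV_nonpos_imp_nonincreasing[of 0 1])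
    fix t :: real assume t: "0 \<le> t" "t \<le> 1"
    have D: "(\<phi> has_real_derivative (grad (a + t *\<^sub>R d) - grad a) \<bullet> d - L * t * (norm d)^2) (at t)"
      unfolding \<phi>_def[abs_def]
      by (rule derivative_eq_intros has_real_derivative_f_line refl | simp add: inner_diff_left)+
    have "(grad (a + t *\<^sub>R d) - grad a) \<bullet> d \<le> norm (grad (a + t *\<^sub>R d) - grad a) * norm d"
      by (rule norm_cauchy_schwarz)
    also have "\<dots> \<le> (L * norm (t *\<^sub>R d)) * norm d"
      using grad_lipschitz[of "a + t *\<^sub>R d" a] by (simp add: mult_right_mono)
    also have "\<dots> = L * t * (norm d)^2"
      using t by (simp add: power2_eq_square)
    finally show "\<exists>y. (\<phi> has_real_derivative y) (at t) \<and> y \<le> 0"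
      using D by force
  qed simp
  then show ?thesis by (simp add: \<phi>_def d_def)
qed

text \<open>Evaluate the tangent lower bound at x and the quadratic upper bound at y in the point
  y - (grad y - grad x) / L.\<close>
lemma f_gap_ge_grad_diff_sq: "(norm (grad y - grad x))^2 / (2 * L) \<le> f y - f x - grad x \<bullet> (y - x)"
proof -
  define d where "d = grad y - grad x"
  define y' where "y' = y - (1/L) *\<^sub>R d"
  have "f x + grad x \<bullet> (y' - x) \<le> f y'" by (rule f_ge_tangent)
  moreover have "f y' \<le> f y + grad y \<bullet> (y' - y) + L / 2 * (norm (y' - y))^2"
    by (rule f_le_quadratic_upper)
  moreover have "grad y \<bullet> (y' - y) - grad x \<bullet> (y' - x) = - (grad x \<bullet> (y - x)) - (norm d)^2 / L"
  proof -
    have "grad y \<bullet> d - grad x \<bullet> d = (norm d)^2"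
      by (simp add: d_def inner_diff_left power2_norm_eq_inner)
    then show ?thesis
      using L_pos by (simp add: y'_def inner_diff_right inner_add_right field_simps)
  qed
  moreover have "L / 2 * (norm (y' - y))^2 = (norm d)^2 / (2 * L)"
    using L_pos by (simp add: y'_def power2_eq_square field_simps)
  ultimately have "(norm d)^2 / L - (norm d)^2 / (2 * L) \<le> f y - f x - grad x \<bullet> (y - x)"
    by linarith
  moreover have "(norm d)^2 / L - (norm d)^2 / (2 * L) = (norm d)^2 / (2 * L)"
    using L_pos by (simp add: field_simps)
  ultimately show ?thesis by (simp add: d_def)
qed

lemma grad_cocoercive: "(norm (grad x - grad y))^2 \<le> L * ((grad x - grad y) \<bullet> (x - y))"
proof -
  have "(norm (grad x - grad y))^2 / L \<le> (grad x - grad y) \<bullet> (x - y)"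
    using f_gap_ge_grad_diff_sq[of x y] f_gap_ge_grad_diff_sq[of y x]
    by (simp add: norm_minus_commute inner_diff_left inner_diff_right field_simps)
  then show ?thesis
    using L_pos by (simp add: field_simps)
qed

end

section \<open>The leapfrog integrator\<close>

lemma neg_inner_le_amgm:
  fixes x y :: "'a::real_inner"
  assumes "0 < e" "0 \<le> c"
  shows "- c * (x \<bullet> y) \<le> e * (norm y)^2 + c^2 * (norm x)^2 / (4 * e)"
proof -
  have "- c * (x \<bullet> y) \<le> c * (norm x * norm y)"
    using mult_left_mono[OF norm_cauchy_schwarz[of "-x" y] assms(2)] by simp
  also have "\<dots> \<le> e * (norm y)^2 + c^2 * (norm x)^2 / (4 * e)"
  proof -
    have "e * (norm y)^2 + c^2 * (norm x)^2 / (4 * e) - c * (norm x * norm y)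
        = (2 * e * norm y - c * norm x)^2 / (4 * e)"
      using assms(1) by (simp add: field_simps power2_eq_square)
    moreover have "0 \<le> (2 * e * norm y - c * norm x)^2 / (4 * e)"
      using assms(1) by simp
    ultimately show ?thesis by linarith
  qed
  finally show ?thesis .
qed

lemma inner_le_half_norm_sq:
  fixes x y :: "'a::real_inner"
  shows "x \<bullet> y \<le> ((norm x)^2 + (norm y)^2) / 2"
  using zero_le_power2[of "norm (x - y)"]
  by (simp add: power2_norm_eq_inner inner_diff_left inner_diff_right inner_commute)

lemma norm_add_sq_le:
  fixes x y :: "'a::real_inner"
  shows "(norm (x + y))^2 \<le> 2 * (norm x)^2 + 2 * (norm y)^2"
  using zero_le_power2[of "norm (x - y)"]
  by (simp add: power2_norm_eq_inner inner_add_left inner_add_right inner_diff_left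
      inner_diff_right inner_commute)

lemma norm_sq_ge_of_small_drift:
  fixes z :: "'i \<Rightarrow> 'a::real_normed_vector"
  assumes drift: "\<And>i. i \<in> S \<Longrightarrow> norm (z i - z0) \<le> 3/40 * norm (z k)"
    and k: "k \<in> S" and j: "j \<in> S"
  shows "4/5 * (norm z0)^2 \<le> (norm (z j))^2"
proof -
  have "norm (z k) \<le> norm z0 + norm (z k - z0)"
    by (metis norm_triangle_sub add.commute)
  then have "norm (z k) \<le> 40/37 * norm z0"
    using drift[OF k] by linarith
  moreover have "norm z0 \<le> norm (z j) + norm (z j - z0)"
    by (metis norm_triangle_sub norm_minus_commute add.commute)
  ultimately have "34/37 * norm z0 \<le> norm (z j)"
    using drift[OF j] by linarith
  then have "(34/37 * norm z0)^2 \<le> (norm (z j))^2"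
    by (intro power_mono) auto
  moreover have "4/5 * (norm z0)^2 \<le> (34/37)^2 * (norm z0)^2"
    by (intro mult_right_mono) (auto simp: power2_eq_square)
  moreover have "(34/37 * norm z0)^2 = (34/37)^2 * (norm z0)^2"
    by (rule power_mult_distrib)
  ultimately show ?thesis by linarith
qed

lemma contraction_of_sq_contraction:
  fixes a b e :: real
  assumes "a^2 \<le> (1 - e/5) * b^2" "0 \<le> e" "e \<le> 10" "0 \<le> b"
  shows "a \<le> (1 - e/10) * b"
proof (rule power2_le_imp_le)
  have "((1 - e/10) * b)^2 = (1 - e/5) * b^2 + (e/10)^2 * b^2"
    by (simp add: power2_eq_square algebra_simps)
  then show "a^2 \<le> ((1 - e/10) * b)^2"
    using assms(1) by (smt (verit) zero_le_power2 mult_nonneg_nonneg)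
  show "0 \<le> (1 - e/10) * b"
    using assms by simp
qed

definition leap_lyapunov :: "real \<Rightarrow> real \<Rightarrow> real \<Rightarrow> 'a::real_inner \<Rightarrow> 'a \<Rightarrow> 'a \<Rightarrow> real" where
  "leap_lyapunov L h s z w g =
     (norm (z + s *\<^sub>R w))^2 + h^2 / 4 * s^2 * (norm g)^2 + 3/5 * L * s^4 * (norm w)^2"

lemma leap_lyapunov_step_identity:
  fixes z w g g' :: "'a::real_inner" and L h s :: real
  defines "z' \<equiv> z + h *\<^sub>R w - (h^2 / 2) *\<^sub>R g"
    and "w' \<equiv> w - (h / 2) *\<^sub>R (g + g')"
    and "\<gamma> \<equiv> 3/5 * L * s^4" and "\<gamma>' \<equiv> 3/5 * L * (s - h)^4"
  shows "leap_lyapunov L h (s - h) z' w' g' - leap_lyapunov L h s z w g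
     = - h * (s * (g \<bullet> z) + (s - h) * (g' \<bullet> z'))
       - h * (s^2 + \<gamma>') * (w \<bullet> g) - h * ((s - h)^2 + \<gamma>') * (w \<bullet> g')
       + h^2 * (s - h)^2 / 2 * (g \<bullet> g' + (norm g')^2) + h^2 * \<gamma>' / 4 * (norm (g + g'))^2
       - (\<gamma> - \<gamma>') * (norm w)^2"
  unfolding z'_def w'_def \<gamma>_def \<gamma>'_def leap_lyapunov_def
  by (simp add: power2_norm_eq_inner inner_add_left inner_add_right inner_diff_left inner_diff_right
      inner_commute[of w z] inner_commute[of g z] inner_commute[of g' z] inner_commute[of g w]
      inner_commute[of g' w] inner_commute[of g' g])
     (simp add: field_simps power2_eq_square power4_eq_xxxx; algebra)

lemma leap_cross_term_le:
  fixes w g z :: "'a::real_inner"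
  assumes h: "0 < h" and \<sigma>: "0 \<le> \<sigma>" and L: "0 < L" and \<gamma>: "0 \<le> \<gamma>" "\<gamma> \<le> 3/100 * \<sigma>^2"
    and coc: "(norm g)^2 \<le> L * (g \<bullet> z)"
  shows "- h * (\<sigma>^2 + \<gamma>) * (w \<bullet> g)
    \<le> h * \<sigma> * (g \<bullet> z) / 2 + h * L * (103/100)^2 * \<sigma>^3 * (norm w)^2 / 2"
proof (cases "\<sigma> = 0")
  case True
  then show ?thesis using \<gamma> by simp
next
  case False
  with \<sigma> have \<sigma>_pos: "0 < \<sigma>" by simp
  define e where "e = h * \<sigma> / (2 * L)"
  have e: "0 < e" using h \<sigma>_pos L by (simp add: e_def)
  have "- h * (\<sigma>^2 + \<gamma>) * (w \<bullet> g)
      \<le> e * (norm g)^2 + (h * (\<sigma>^2 + \<gamma>))^2 * (norm w)^2 / (4 * e)"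
    using neg_inner_le_amgm[OF e, of "h * (\<sigma>^2 + \<gamma>)" w g] h \<gamma> by simp
  moreover have "e * (norm g)^2 \<le> h * \<sigma> * (g \<bullet> z) / 2"
    using mult_left_mono[OF coc, of e] e L by (simp add: e_def)
  moreover have "(h * (\<sigma>^2 + \<gamma>))^2 * (norm w)^2 / (4 * e)
      = h * L * (\<sigma>^2 + \<gamma>)^2 * (norm w)^2 / (2 * \<sigma>)"
    using h \<sigma>_pos L by (simp add: e_def field_simps power2_eq_square)
  moreover have "h * L * (\<sigma>^2 + \<gamma>)^2 * (norm w)^2 / (2 * \<sigma>)
      \<le> h * L * ((103/100)^2 * \<sigma>^4) * (norm w)^2 / (2 * \<sigma>)"
  proof -
    have "(\<sigma>^2 + \<gamma>)^2 \<le> (103/100 * \<sigma>^2)^2"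
      using \<gamma> by (intro power_mono) auto
    then have "(\<sigma>^2 + \<gamma>)^2 \<le> (103/100)^2 * \<sigma>^4"
      by (simp add: power_mult_distrib power2_eq_square power4_eq_xxxx)
    then show ?thesis
      using h L \<sigma>_pos by (intro divide_right_mono mult_right_mono mult_left_mono) auto
  qed
  moreover have "h * L * ((103/100)^2 * \<sigma>^4) * (norm w)^2 / (2 * \<sigma>)
      = h * L * (103/100)^2 * \<sigma>^3 * (norm w)^2 / 2"
    using \<sigma>_pos by (simp add: field_simps power3_eq_cube power4_eq_xxxx)
  ultimately show ?thesis by linarith
qed

lemma leap_velocity_weight_le:
  fixes h s L B :: real
  assumes "0 \<le> h" "h \<le> s" "0 \<le> L" "0 \<le> B"
  shows "h * L * (103/100)^2 * s^3 * B / 2 + h * L * (103/100)^2 * (s - h)^3 * B / 2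
    \<le> (3/5 * L * s^4 - 3/5 * L * (s - h)^4) * B"
proof -
  define X where "X = h * (s^3 + (s - h)^3)"
  define Y where "Y = s^4 - (s - h)^4"
  have "Y - X = h * (s^2 * (s - h) + s * (s - h)^2)"
    by (simp add: X_def Y_def algebra_simps power2_eq_square power3_eq_cube power4_eq_xxxx)
  moreover have "0 \<le> h * (s^2 * (s - h) + s * (s - h)^2)" "0 \<le> X"
    using assms by (simp_all add: X_def)
  ultimately have "10609/20000 * X \<le> 3/5 * Y"
    by linarith
  from mult_right_mono[OF mult_left_mono[OF this assms(3)] assms(4)] show ?thesis
    by (simp add: X_def Y_def power2_eq_square field_simps)
qed

lemma leap_gradient_coefficients_le:
  fixes h s L :: real
  assumes h: "0 < h" "h \<le> s" and L: "0 < L" and Ls: "L * s^2 \<le> 1/20"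
  shows "L * (h^2 * ((s - h)^2 / 4 + 3/10 * L * (s - h)^4)) \<le> h * s / 10"
    and "L * (h^2 * (3/4 * (s - h)^2 + 3/10 * L * (s - h)^4)) \<le> h * (s - h) / 10"
proof -
  define u where "u = L * (s - h)^2"
  define v where "v = L * h * (s - h)"
  have "u \<le> L * s^2" using h L by (simp add: u_def mult_left_mono power_mono)
  then have u: "0 \<le> u" "u \<le> 1/20" using Ls L by (simp add: u_def, linarith)
  have "v \<le> L * s^2" using h L by (simp add: v_def power2_eq_square mult_mono)
  then have v: "0 \<le> v" "v \<le> 1/20" using Ls L h by (simp add: v_def, linarith)
  have "u^2 \<le> u * (1/20)"
    using mult_left_mono[OF u(2) u(1)] by (simp add: power2_eq_square)
  then have "h * (u / 4 + 3/10 * u^2) \<le> s * (1/10)"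
    using h u by (intro mult_mono) auto
  moreover have "L * (h^2 * ((s - h)^2 / 4 + 3/10 * L * (s - h)^4)) = h * (h * (u / 4 + 3/10 * u^2))"
    by (simp add: u_def power2_eq_square power4_eq_xxxx algebra_simps)
  ultimately show "L * (h^2 * ((s - h)^2 / 4 + 3/10 * L * (s - h)^4)) \<le> h * s / 10"
    using mult_left_mono[of "h * (u / 4 + 3/10 * u^2)" "s * (1/10)" h] h by simp
  have "v * u \<le> v * (1/20)"
    using mult_left_mono[OF u(2) v(1)] .
  then have "3/4 * v + 3/10 * v * u \<le> 1/10"
    using v by linarith
  moreover have "L * (h^2 * (3/4 * (s - h)^2 + 3/10 * L * (s - h)^4))
      = h * (s - h) * (3/4 * v + 3/10 * v * u)"
    by (simp add: u_def v_def power2_eq_square power4_eq_xxxx field_simps)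
  ultimately show "L * (h^2 * (3/4 * (s - h)^2 + 3/10 * L * (s - h)^4)) \<le> h * (s - h) / 10"
    using mult_left_mono[of "3/4 * v + 3/10 * v * u" "1/10" "h * (s - h)"] h by simp
qed

lemma leap_gradient_terms_le:
  fixes g g' :: "'a::real_inner"
  assumes h: "0 < h" "h \<le> s" and L: "0 < L" and Ls: "L * s^2 \<le> 1/20"
    and A: "(norm g)^2 \<le> L * P" and A': "(norm g')^2 \<le> L * P'"
  shows "h^2 * (s - h)^2 / 2 * (g \<bullet> g' + (norm g')^2)
       + h^2 * (3/5 * L * (s - h)^4) / 4 * (norm (g + g'))^2
     \<le> (h * s * P + h * (s - h) * P') / 10"
proof -
  let ?a = "h^2 * ((s - h)^2 / 4 + 3/10 * L * (s - h)^4)"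
  let ?b = "h^2 * (3/4 * (s - h)^2 + 3/10 * L * (s - h)^4)"
  have P: "0 \<le> P" "0 \<le> P'"
    using A A' L by (metis zero_le_power2 order_trans zero_le_mult_iff not_le)+
  have "h^2 * (s - h)^2 / 2 * (g \<bullet> g' + (norm g')^2)
       + h^2 * (3/5 * L * (s - h)^4) / 4 * (norm (g + g'))^2
     \<le> h^2 * (s - h)^2 / 2 * (((norm g)^2 + (norm g')^2) / 2 + (norm g')^2)
       + h^2 * (3/5 * L * (s - h)^4) / 4 * (2 * (norm g)^2 + 2 * (norm g')^2)"
    using inner_le_half_norm_sq[of g g'] norm_add_sq_le[of g g'] L
    by (intro add_mono mult_left_mono) auto
  also have "\<dots> = ?a * (norm g)^2 + ?b * (norm g')^2"
    by (simp add: algebra_simps add_divide_distrib)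
  also have "\<dots> \<le> (L * ?a) * P + (L * ?b) * P'"
    using mult_left_mono[OF A, of ?a] mult_left_mono[OF A', of ?b] L by (simp add: mult_ac)
  also have "\<dots> \<le> (h * s / 10) * P + (h * (s - h) / 10) * P'"
    using leap_gradient_coefficients_le[OF h L Ls] P by (intro add_mono mult_right_mono)
  finally show ?thesis
    by (simp add: add_divide_distrib)
qed

lemma leap_lyapunov_step_le:
  fixes z w g g' :: "'a::real_inner"
  assumes h: "0 < h" "h \<le> s" and L: "0 < L" and Ls: "L * s^2 \<le> 1/20"
    and coc: "(norm g)^2 \<le> L * (g \<bullet> z)" and coc': "(norm g')^2 \<le> L * (g' \<bullet> z')"
    and z': "z' = z + h *\<^sub>R w - (h^2 / 2) *\<^sub>R g"
    and w': "w' = w - (h / 2) *\<^sub>R (g + g')"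
  shows "leap_lyapunov L h (s - h) z' w' g' - leap_lyapunov L h s z w g
     \<le> - (2/5) * h * (s * (g \<bullet> z) + (s - h) * (g' \<bullet> z'))"
proof -
  define \<gamma>' where "\<gamma>' = 3/5 * L * (s - h)^4"
  have s': "0 \<le> s - h" "s - h \<le> s" using h by simp_all
  have "(s - h)^2 \<le> s^2" using s' by (intro power_mono) auto
  then have "L * (s - h)^2 \<le> 1/20" using Ls L mult_left_mono[of "(s - h)^2" "s^2" L] by linarith
  then have "\<gamma>' \<le> 3/100 * (s - h)^2"
    using mult_right_mono[of "L * (s - h)^2" "1/20" "(s - h)^2"]
    by (simp add: \<gamma>'_def power2_eq_square power4_eq_xxxx)
  moreover have "3/100 * (s - h)^2 \<le> 3/100 * s^2" using \<open>(s - h)^2 \<le> s^2\<close> by simp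
  moreover have "0 \<le> \<gamma>'" using L by (simp add: \<gamma>'_def)
  ultimately have \<gamma>': "0 \<le> \<gamma>'" "\<gamma>' \<le> 3/100 * (s - h)^2" "\<gamma>' \<le> 3/100 * s^2"
    by linarith+
  then have
    "- h * (s^2 + \<gamma>') * (w \<bullet> g)
       \<le> h * s * (g \<bullet> z) / 2 + h * L * (103/100)^2 * s^3 * (norm w)^2 / 2"
    "- h * ((s - h)^2 + \<gamma>') * (w \<bullet> g')
       \<le> h * (s - h) * (g' \<bullet> z') / 2 + h * L * (103/100)^2 * (s - h)^3 * (norm w)^2 / 2"
    using leap_cross_term_le[where \<sigma>=s, OF h(1) _ L _ _ coc]
      leap_cross_term_le[where \<sigma>="s - h", OF h(1) s'(1) L _ _ coc'] h
    by auto
  note cross = this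
  let ?c = "h * L * (103/100)^2 * s^3 * (norm w)^2 / 2"
  let ?c' = "h * L * (103/100)^2 * (s - h)^3 * (norm w)^2 / 2"
  let ?P = "g \<bullet> z" and ?P' = "g' \<bullet> z'"
  have "leap_lyapunov L h (s - h) z' w' g' - leap_lyapunov L h s z w g
     = - h * (s * ?P + (s - h) * ?P')
       - h * (s^2 + \<gamma>') * (w \<bullet> g) - h * ((s - h)^2 + \<gamma>') * (w \<bullet> g')
       + h^2 * (s - h)^2 / 2 * (g \<bullet> g' + (norm g')^2) + h^2 * \<gamma>' / 4 * (norm (g + g'))^2
       - (3/5 * L * s^4 - \<gamma>') * (norm w)^2"
    unfolding z' w' \<gamma>'_def by (rule leap_lyapunov_step_identity)
  also have "\<dots> \<le> - h * (s * ?P + (s - h) * ?P') + (h * s * ?P / 2 + ?c) + (h * (s - h) * ?P' / 2 + ?c')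
       + (h * s * ?P + h * (s - h) * ?P') / 10 - (3/5 * L * s^4 - \<gamma>') * (norm w)^2"
    using cross leap_gradient_terms_le[OF h L Ls coc coc', folded \<gamma>'_def] by linarith
  also have "\<dots> = - (2/5) * h * (s * ?P + (s - h) * ?P') + (?c + ?c' - (3/5 * L * s^4 - \<gamma>') * (norm w)^2)"
    by (simp add: field_simps)
  also have "\<dots> \<le> - (2/5) * h * (s * ?P + (s - h) * ?P')"
    using leap_velocity_weight_le[of h s L "(norm w)^2"] h L by (simp add: \<gamma>'_def)
  finally show ?thesis .
qed

lemma leap_velocity_bound:
  fixes w g :: "nat \<Rightarrow> 'a::real_normed_vector"
  assumes rw: "\<And>j. w (Suc j) = w j - (h/2) *\<^sub>R (g j + g (Suc j))"
    and w0: "w 0 = 0" and g: "\<And>j. j \<le> N \<Longrightarrow> norm (g j) \<le> G" and h: "0 \<le> h"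
  shows "j \<le> N \<Longrightarrow> norm (w j) \<le> real j * h * G"
proof (induction j)
  case 0
  then show ?case using w0 by simp
next
  case (Suc j)
  have "norm (w (Suc j)) \<le> norm (w j) + (h/2) * norm (g j + g (Suc j))"
    unfolding rw using h norm_triangle_ineq4[of "w j" "(h/2) *\<^sub>R (g j + g (Suc j))"] by simp
  also have "\<dots> \<le> norm (w j) + (h/2) * (G + G)"
    using norm_triangle_ineq[of "g j" "g (Suc j)"] g[of j] g[of "Suc j"] Suc.prems h
    by (intro add_left_mono mult_left_mono) auto
  also have "\<dots> \<le> real j * h * G + (h/2) * (G + G)"
    using Suc by simp
  finally show ?case
    by (simp add: algebra_simps)
qed

lemma leap_position_drift_le:
  fixes z w g :: "nat \<Rightarrow> 'a::real_normed_vector"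
  assumes rz: "\<And>j. z (Suc j) = z j + h *\<^sub>R w j - (h^2/2) *\<^sub>R g j"
    and rw: "\<And>j. w (Suc j) = w j - (h/2) *\<^sub>R (g j + g (Suc j))"
    and w0: "w 0 = 0" and g: "\<And>j. j \<le> N \<Longrightarrow> norm (g j) \<le> G"
    and h: "0 < h" and NT: "real N * h = T"
  shows "i \<le> N \<Longrightarrow> norm (z i - z 0) \<le> real i * h * (3/2 * T * G)"
proof (induction i)
  case 0
  then show ?case by simp
next
  case (Suc i)
  then have i: "i \<le> N" by simp
  have G: "0 \<le> G" using g[of 0] norm_ge_zero[of "g 0"] by linarith
  have ih: "real i * h \<le> T" "real (Suc i) * h \<le> T"
    using i Suc.prems h NT by (metis mult_right_mono of_nat_mono less_imp_le)+
  have "z (Suc i) - z 0 = (z i - z 0) + h *\<^sub>R w i - (h^2/2) *\<^sub>R g i"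
    unfolding rz by simp
  then have "norm (z (Suc i) - z 0) \<le> norm (z i - z 0) + norm (h *\<^sub>R w i) + norm ((h^2/2) *\<^sub>R g i)"
    by (metis norm_triangle_ineq4 norm_triangle_ineq add_right_mono order_trans)
  also have "\<dots> = norm (z i - z 0) + h * norm (w i) + (h^2/2) * norm (g i)"
    using h by simp
  also have "\<dots> \<le> real i * h * (3/2 * T * G) + h * (T * G) + (h^2/2) * G"
  proof -
    have "norm (w i) \<le> T * G"
      using leap_velocity_bound[OF rw w0 g less_imp_le[OF h] i] mult_right_mono[OF ih(1) G]
      by simp
    then show ?thesis
      using Suc.IH[OF i] g[OF i] h by (intro add_mono mult_left_mono) auto
  qed
  also have "\<dots> \<le> real (Suc i) * h * (3/2 * T * G)"
  proof -
    have "real (Suc i) * h = h + real i * h" "0 \<le> real i * h"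
      using h by (simp_all add: distrib_right)
    then have "h \<le> T"
      using ih(2) by linarith
    then have "(h^2/2) * G \<le> h * (1/2 * T * G)"
      using h G by (simp add: power2_eq_square mult_right_mono mult_left_mono mult.assoc)
    then show ?thesis by (simp add: algebra_simps)
  qed
  finally show ?case .
qed

lemma leap_position_drift:
  fixes z w g :: "nat \<Rightarrow> 'a::real_normed_vector"
  assumes rz: "\<And>j. z (Suc j) = z j + h *\<^sub>R w j - (h^2/2) *\<^sub>R g j"
    and rw: "\<And>j. w (Suc j) = w j - (h/2) *\<^sub>R (g j + g (Suc j))"
    and w0: "w 0 = 0" and g: "\<And>j. j \<le> N \<Longrightarrow> norm (g j) \<le> G"
    and h: "0 < h" and NT: "real N * h = T" and j: "j \<le> N"
  shows "norm (z j - z 0) \<le> 3/2 * T^2 * G"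
proof -
  have "0 \<le> G" using g[of 0] norm_ge_zero[of "g 0"] by linarith
  then have "real j * h * (3/2 * T * G) \<le> T * (3/2 * T * G)"
    using j h NT by (intro mult_right_mono) (auto intro: order_trans[OF mult_right_mono])
  with leap_position_drift_le[OF rz rw w0 g h NT j] show ?thesis
    by (simp add: power2_eq_square algebra_simps)
qed

lemma sum_consecutive_pairs_eq_square: "(\<Sum>j<N. real (N - j) + real (N - Suc j)) = (real N)^2"
proof (induction N)
  case 0
  then show ?case by simp
next
  case (Suc N)
  have "(\<Sum>j<Suc N. real (Suc N - j) + real (Suc N - Suc j))
      = (real (Suc N) + real N) + (\<Sum>j<N. real (N - j) + real (N - Suc j))"
    by (subst sum.lessThan_Suc_shift) simp
  then show ?case
    using Suc by (simp add: power2_eq_square algebra_simps)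
qed

text \<open>A trapezoidal discretisation, on the grid of mesh h, of the integral of 2 (T - t) p t over [0, T].\<close>
definition leap_dissipation :: "nat \<Rightarrow> real \<Rightarrow> (nat \<Rightarrow> real) \<Rightarrow> real" where
  "leap_dissipation N h p = (\<Sum>j<N. h * (real (N - j) * h * p j + real (N - Suc j) * h * p (Suc j)))"

lemma leap_dissipation_ge:
  assumes p: "\<And>j. j \<le> N \<Longrightarrow> c \<le> p j" and h: "0 \<le> h"
  shows "c * (real N * h)^2 \<le> leap_dissipation N h p"
proof -
  have "h * (real (N - j) * h * c + real (N - Suc j) * h * c)
      = c * h^2 * (real (N - j) + real (N - Suc j))" for j
    by (simp add: power2_eq_square algebra_simps)
  then have "leap_dissipation N h (\<lambda>_. c) = (\<Sum>j<N. c * h^2 * (real (N - j) + real (N - Suc j)))"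
    unfolding leap_dissipation_def by (rule sum.cong[OF refl])
  also have "\<dots> = c * (real N * h)^2"
    by (simp only: sum_distrib_left[symmetric] sum_consecutive_pairs_eq_square power_mult_distrib
        mult_ac)
  finally have "c * (real N * h)^2 = leap_dissipation N h (\<lambda>_. c)" ..
  also have "\<dots> \<le> leap_dissipation N h p"
    unfolding leap_dissipation_def using p h by (intro sum_mono mult_left_mono add_mono) auto
  finally show ?thesis .
qed

lemma leap_dissipation_ge_first_term:
  assumes "0 < N" "0 \<le> h" "\<And>j. 0 \<le> p j"
  shows "real N * h * h * p 0 \<le> leap_dissipation N h p"
proof -
  have "0 \<le> h * (real (N - Suc 0) * h * p (Suc 0))"
    using assms by simp
  then have "real N * h * h * p 0 \<le> h * (real (N - 0) * h * p 0 + real (N - Suc 0) * h * p (Suc 0))"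
    by (simp add: distrib_left mult_ac)
  also have "\<dots> \<le> leap_dissipation N h p"
    unfolding leap_dissipation_def using assms by (intro member_le_sum) auto
  finally show ?thesis .
qed

lemma leap_lyapunov_decrease:
  fixes z w g :: "nat \<Rightarrow> 'a::real_inner"
  assumes rz: "\<And>j. z (Suc j) = z j + h *\<^sub>R w j - (h^2/2) *\<^sub>R g j"
    and rw: "\<And>j. w (Suc j) = w j - (h/2) *\<^sub>R (g j + g (Suc j))"
    and coc: "\<And>j. (norm (g j))^2 \<le> L * (g j \<bullet> z j)"
    and h: "0 < h" and NT: "real N * h = T" and LT: "L * T^2 \<le> 1/20" and L: "0 < L"
  shows "leap_lyapunov L h 0 (z N) (w N) (g N) - leap_lyapunov L h T (z 0) (w 0) (g 0)
    \<le> - (2/5) * leap_dissipation N h (\<lambda>j. g j \<bullet> z j)"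
proof -
  define s where "s j = real (N - j) * h" for j
  define V where "V j = leap_lyapunov L h (s j) (z j) (w j) (g j)" for j
  have step: "V (Suc j) - V j \<le> - (2/5) * (h * (s j * (g j \<bullet> z j) + s (Suc j) * (g (Suc j) \<bullet> z (Suc j))))"
    if "j < N" for j
  proof -
    have "1 \<le> real (N - j)" "real (N - j) \<le> real N"
      using that by auto
    from mult_right_mono[OF this(1), of h] mult_right_mono[OF this(2), of h]
    have "s (Suc j) = s j - h" "h \<le> s j" "s j \<le> T"
      using that h NT by (simp_all add: s_def of_nat_diff algebra_simps)
    moreover have "L * (s j)^2 \<le> 1/20"
    proof -
      have "(s j)^2 \<le> T^2"
        using \<open>h \<le> s j\<close> \<open>s j \<le> T\<close> h by (intro power_mono) auto
      then show ?thesis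
        using LT mult_left_mono[of "(s j)^2" "T^2" L] L by linarith
    qed
    ultimately show ?thesis
      unfolding V_def
      using leap_lyapunov_step_le[where s="s j", OF h(1) _ L _ coc[of j] coc[of "Suc j"] rz rw]
      by (simp add: mult.assoc)
  qed
  have "V N - V 0 = (\<Sum>j<N. V (Suc j) - V j)"
    by (simp add: sum_lessThan_telescope)
  also have "\<dots> \<le> (\<Sum>j<N. - (2/5) * (h * (s j * (g j \<bullet> z j) + s (Suc j) * (g (Suc j) \<bullet> z (Suc j)))))"
    using step by (intro sum_mono) simp
  also have "\<dots> = - (2/5) * leap_dissipation N h (\<lambda>j. g j \<bullet> z j)"
    by (simp add: leap_dissipation_def sum_distrib_left s_def)
  finally show ?thesis
    using NT by (simp add: V_def s_def)
qed

lemma leap_norm_sq_decrease: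
  fixes z w g :: "nat \<Rightarrow> 'a::real_inner"
  assumes rz: "\<And>j. z (Suc j) = z j + h *\<^sub>R w j - (h^2/2) *\<^sub>R g j"
    and rw: "\<And>j. w (Suc j) = w j - (h/2) *\<^sub>R (g j + g (Suc j))"
    and w0: "w 0 = 0" and coc: "\<And>j. (norm (g j))^2 \<le> L * (g j \<bullet> z j)"
    and h: "0 < h" and NT: "real N * h = T" and LT: "L * T^2 \<le> 1/20" and L: "0 < L"
  shows "(norm (z N))^2 \<le> (norm (z 0))^2 - 31/80 * leap_dissipation N h (\<lambda>j. g j \<bullet> z j)"
proof (cases "N = 0")
  case True
  then show ?thesis by (simp add: leap_dissipation_def)
next
  case False
  have p: "0 \<le> g j \<bullet> z j" for j
    using coc[of j] L by (metis zero_le_power2 order_trans zero_le_mult_iff not_le)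
  have "1 * h \<le> real N * h"
    using False h by (intro mult_right_mono) auto
  then have "L * (h * T) \<le> L * T^2"
    using h L NT by (intro mult_left_mono) (auto simp: power2_eq_square intro: mult_right_mono)
  then have LhT: "L * (h * T) \<le> 1/20" using LT by linarith
  have "h^2/4 * T^2 * (norm (g 0))^2 \<le> h^2/4 * T^2 * (L * (g 0 \<bullet> z 0))"
    using coc[of 0] by (intro mult_left_mono) auto
  also have "\<dots> = (real N * h * h * (g 0 \<bullet> z 0)) * (L * (h * T)) / 4"
    using NT by (simp add: power2_eq_square algebra_simps)
  also have "\<dots> \<le> (real N * h * h * (g 0 \<bullet> z 0)) * (1/20) / 4"
    using LhT h p[of 0] by (intro divide_right_mono mult_left_mono) auto
  also have "\<dots> \<le> leap_dissipation N h (\<lambda>j. g j \<bullet> z j) / 80"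
    using leap_dissipation_ge_first_term[of N h "\<lambda>j. g j \<bullet> z j"] False h p by simp
  finally have "h^2/4 * T^2 * (norm (g 0))^2 \<le> leap_dissipation N h (\<lambda>j. g j \<bullet> z j) / 80" .
  moreover have "leap_lyapunov L h 0 (z N) (w N) (g N) = (norm (z N))^2"
    "leap_lyapunov L h T (z 0) (w 0) (g 0) = (norm (z 0))^2 + h^2/4 * T^2 * (norm (g 0))^2"
    using w0 by (simp_all add: leap_lyapunov_def)
  ultimately show ?thesis
    using leap_lyapunov_decrease[where z=z and w=w and g=g, OF rz rw coc h NT LT L] by linarith
qed

lemma leap_contraction_sq:
  fixes z w g :: "nat \<Rightarrow> 'a::real_inner"
  assumes rz: "\<And>j. z (Suc j) = z j + h *\<^sub>R w j - (h^2/2) *\<^sub>R g j"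
    and rw: "\<And>j. w (Suc j) = w j - (h/2) *\<^sub>R (g j + g (Suc j))"
    and w0: "w 0 = 0" and coc: "\<And>j. (norm (g j))^2 \<le> L * (g j \<bullet> z j)"
    and lip: "\<And>j. norm (g j) \<le> L * norm (z j)"
    and strong: "\<And>j. \<alpha> * (norm (z j))^2 \<le> g j \<bullet> z j"
    and h: "0 < h" and NT: "real N * h = T" and LT: "L * T^2 \<le> 1/20"
    and \<alpha>: "0 < \<alpha>" and L: "0 < L"
  shows "(norm (z N))^2 \<le> (1 - \<alpha> * T^2 / 5) * (norm (z 0))^2"
proof -
  obtain k where k: "k \<le> N" "\<And>j. j \<le> N \<Longrightarrow> norm (z j) \<le> norm (z k)"
  proof -
    have "Max ((\<lambda>j. norm (z j)) ` {..N}) \<in> (\<lambda>j. norm (z j)) ` {..N}"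
      by (intro Max_in) auto
    then obtain k where "k \<le> N" "norm (z k) = Max ((\<lambda>j. norm (z j)) ` {..N})"
      by (metis atMost_iff imageE)
    moreover have "norm (z j) \<le> Max ((\<lambda>j. norm (z j)) ` {..N})" if "j \<le> N" for j
      using that by (intro Max_ge) auto
    ultimately show thesis using that by auto
  qed
  have "norm (z j - z 0) \<le> 3/40 * norm (z k)" if "j \<le> N" for j
  proof -
    have "norm (g i) \<le> L * norm (z k)" if "i \<le> N" for i
      using lip[of i] mult_left_mono[OF k(2)[OF that] less_imp_le[OF L]] by linarith
    then have "norm (z j - z 0) \<le> 3/2 * T^2 * (L * norm (z k))"
      by (rule leap_position_drift[OF rz rw w0 _ h NT \<open>j \<le> N\<close>])
    also have "\<dots> \<le> 3/2 * (1/20) * norm (z k)"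
      using mult_right_mono[OF LT, of "norm (z k)"] by (simp add: algebra_simps)
    finally show ?thesis by simp
  qed
  then have "\<alpha> * (4/5 * (norm (z 0))^2) \<le> g j \<bullet> z j" if "j \<le> N" for j
    using norm_sq_ge_of_small_drift[of "{..N}" z "z 0" k j] k(1) that strong[of j] \<alpha>
    by (smt (verit) atMost_iff mult_left_mono)
  with leap_dissipation_ge[of N "\<alpha> * (4/5 * (norm (z 0))^2)" "\<lambda>j. g j \<bullet> z j" h] h NT
  have "\<alpha> * (4/5 * (norm (z 0))^2) * T^2 \<le> leap_dissipation N h (\<lambda>j. g j \<bullet> z j)"
    by simp
  with leap_norm_sq_decrease[OF rz rw w0 coc h NT LT L]
  have "(norm (z N))^2 \<le> (norm (z 0))^2 - 31/80 * (\<alpha> * (4/5 * (norm (z 0))^2) * T^2)"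
    by linarith
  also have "\<dots> \<le> (1 - \<alpha> * T^2 / 5) * (norm (z 0))^2"
    using \<alpha> by (simp add: algebra_simps)
  finally show ?thesis .
qed

section \<open>Lipschitz ordinary differential equations\<close>

lemma has_real_derivative_norm_sq:
  fixes d :: "real \<Rightarrow> 'b::real_inner"
  assumes "(d has_vector_derivative D) (at t within S)"
  shows "((\<lambda>s. (norm (d s))^2) has_real_derivative 2 * (d t \<bullet> D)) (at t within S)"
proof -
  have dd: "(d has_derivative (\<lambda>h. h *\<^sub>R D)) (at t within S)"
    using assms by (simp add: has_vector_derivative_def)
  have "((\<lambda>s. d s \<bullet> d s) has_derivative (\<lambda>h. d t \<bullet> (h *\<^sub>R D) + (h *\<^sub>R D) \<bullet> d t)) (at t within S)"
    by (rule has_derivative_inner[OF dd dd])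
  moreover have "(\<lambda>h. d t \<bullet> (h *\<^sub>R D) + (h *\<^sub>R D) \<bullet> d t) = (*) (2 * (d t \<bullet> D))"
    by (auto simp: fun_eq_iff inner_commute algebra_simps)
  ultimately show ?thesis
    by (simp add: has_field_derivative_def power2_norm_eq_inner)
qed

lemma ode_solutions_dist_sq_le:
  fixes y1 y2 :: "real \<Rightarrow> 'b::real_inner"
  assumes y1: "\<And>t. (y1 has_vector_derivative F (y1 t)) (at t)"
    and y2: "\<And>t. (y2 has_vector_derivative F (y2 t)) (at t)"
    and lip: "K-lipschitz_on UNIV F" and t: "0 \<le> t"
  shows "(norm (y1 t - y2 t))^2 \<le> exp (2 * K * t) * (norm (y1 0 - y2 0))^2"
proof -
  define \<phi> where "\<phi> s = exp (- (2 * K * s)) * (norm (y1 s - y2 s))^2" for s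
  have "\<phi> t \<le> \<phi> 0"
  proof (rule DERIV_nonpos_imp_nonincreasing[OF t])
    fix s :: real
    define d where "d = y1 s - y2 s"
    have dd: "((\<lambda>s. y1 s - y2 s) has_vector_derivative (F (y1 s) - F (y2 s))) (at s)"
      using y1 y2 by (rule derivative_intros)
    have D: "(\<phi> has_real_derivative exp (- (2 * K * s)) * (- (2 * K)) * (norm d)^2
        + exp (- (2 * K * s)) * (2 * (d \<bullet> (F (y1 s) - F (y2 s))))) (at s)"
      unfolding \<phi>_def[abs_def] d_def
      by (rule derivative_eq_intros has_real_derivative_norm_sq[OF dd] refl | simp)+
    have "d \<bullet> (F (y1 s) - F (y2 s)) \<le> norm d * norm (F (y1 s) - F (y2 s))"
      by (rule norm_cauchy_schwarz)
    also have "\<dots> \<le> norm d * (K * norm d)"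
      using lipschitz_onD[OF lip, of "y1 s" "y2 s"] by (intro mult_left_mono) (auto simp: dist_norm d_def)
    finally have "exp (- (2 * K * s)) * (2 * (d \<bullet> (F (y1 s) - F (y2 s))))
        \<le> exp (- (2 * K * s)) * (2 * (K * (norm d)^2))"
      by (intro mult_left_mono) (auto simp: power2_eq_square algebra_simps)
    moreover have "exp (- (2 * K * s)) * (- (2 * K)) * (norm d)^2
        = - (exp (- (2 * K * s)) * (2 * (K * (norm d)^2)))"
      by (simp add: algebra_simps)
    ultimately show "\<exists>y. (\<phi> has_real_derivative y) (at s) \<and> y \<le> 0"
      using D by (intro exI[of _ "exp (- (2 * K * s)) * (- (2 * K)) * (norm d)^2
        + exp (- (2 * K * s)) * (2 * (d \<bullet> (F (y1 s) - F (y2 s))))"]) auto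
  qed
  then have "exp (2 * K * t) * \<phi> t \<le> exp (2 * K * t) * \<phi> 0"
    by (intro mult_left_mono) auto
  then show ?thesis
    by (simp add: \<phi>_def exp_minus mult.assoc[symmetric])
qed

lemma ode_time_reversal:
  assumes "\<And>t. (y has_vector_derivative F (y t)) (at t)"
  shows "((\<lambda>s. y (- s)) has_vector_derivative - F (y (- t))) (at t)"
proof -
  have "(uminus has_vector_derivative -1) (at t)"
    by (auto intro!: derivative_eq_intros simp: has_real_derivative_iff_has_vector_derivative[symmetric])
  from vector_diff_chain_at[OF this assms[of "- t"]] show ?thesis
    by (simp add: o_def)
qed

lemma ode_solution_unique:
  fixes y1 y2 :: "real \<Rightarrow> 'b::real_inner"
  assumes y1: "\<And>t. (y1 has_vector_derivative F (y1 t)) (at t)"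
    and y2: "\<And>t. (y2 has_vector_derivative F (y2 t)) (at t)"
    and lip: "K-lipschitz_on UNIV F" and eq: "y1 0 = y2 0"
  shows "y1 = y2"
proof
  fix t :: real
  have lip': "K-lipschitz_on UNIV (\<lambda>x. - F x)"
    using lip by (auto simp: lipschitz_on_def dist_minus)
  have "(norm (y1 t - y2 t))^2 \<le> 0"
  proof (cases "0 \<le> t")
    case True
    then show ?thesis using ode_solutions_dist_sq_le[OF y1 y2 lip] eq by fastforce
  next
    case False
    then show ?thesis
      using ode_solutions_dist_sq_le[OF ode_time_reversal[OF y1] ode_time_reversal[OF y2] lip', of "- t"]
        eq by simp
  qed
  then show "y1 t = y2 t" by simp
qed


definition picard_iterate :: "('b::euclidean_space \<Rightarrow> 'b) \<Rightarrow> 'b \<Rightarrow> nat \<Rightarrow> real \<Rightarrow> 'b" where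
  "picard_iterate F a n = rec_nat (\<lambda>t. a) (\<lambda>n p t. a + integral {0..t} (\<lambda>s. F (p s))) n"

lemma picard_iterate_0 [simp]: "picard_iterate F a 0 = (\<lambda>t. a)"
  and picard_iterate_Suc:
    "picard_iterate F a (Suc n) = (\<lambda>t. a + integral {0..t} (\<lambda>s. F (picard_iterate F a n s)))"
  by (simp_all add: picard_iterate_def)

lemma integral_monomial:
  fixes t c :: real
  assumes "0 \<le> t"
  shows "integral {0..t} (\<lambda>s. c * s^k) = c * t^(Suc k) / real (Suc k)"
proof -
  have "((\<lambda>s. c * s^k) has_integral (c * t^(Suc k) / real (Suc k) - c * 0^(Suc k) / real (Suc k))) {0..t}"
  proof (rule fundamental_theorem_of_calculus[OF assms])
    fix x :: real
    have "((\<lambda>s. c * s^(Suc k) / real (Suc k)) has_real_derivative c * x^k) (at x within {0..t})"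
      by (rule derivative_eq_intros refl | simp)+
    then show "((\<lambda>s. c * s^(Suc k) / real (Suc k)) has_vector_derivative c * x^k) (at x within {0..t})"
      by (simp add: has_real_derivative_iff_has_vector_derivative)
  qed
  from integral_unique[OF this] show ?thesis
    by simp
qed

context
  fixes F :: "'b::euclidean_space \<Rightarrow> 'b" and K :: real and a :: 'b
  assumes lip: "K-lipschitz_on UNIV F" and K: "0 < K"
begin

private lemma continuous_on_F: "continuous_on S F"
  using lipschitz_on_continuous_on[OF lip] continuous_on_subset by blast

lemma continuous_on_picard_iterate: "continuous_on {0..R} (picard_iterate F a n)"
proof (induction n)
  case 0
  then show ?case by simp
next
  case (Suc n)
  have c: "continuous_on {0..R} (\<lambda>s. F (picard_iterate F a n s))"
    by (rule continuous_on_compose2[OF continuous_on_F Suc.IH]) auto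
  have "continuous (at t within {0..R})
      (\<lambda>u. a + integral {0..u} (\<lambda>s. F (picard_iterate F a n s)))" if "t \<in> {0..R}" for t
    using has_vector_derivative_continuous[OF integral_has_vector_derivative[OF c that]]
    by (intro continuous_intros)
  then show ?case
    by (simp add: picard_iterate_Suc continuous_on_eq_continuous_within)
qed

lemma continuous_on_F_picard_iterate: "continuous_on {0..R} (\<lambda>s. F (picard_iterate F a n s))"
  by (rule continuous_on_compose2[OF continuous_on_F continuous_on_picard_iterate]) auto

lemma picard_iterate_diff_le:
  assumes "0 \<le> t"
  shows "norm (picard_iterate F a (Suc n) t - picard_iterate F a n t)
    \<le> norm (F a) * K^n * t^(Suc n) / fact (Suc n)"
  using assms
proof (induction n arbitrary: t)
  case 0
  then show ?case by (simp add: picard_iterate_Suc content_real)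
next
  case (Suc n)
  let ?P = "picard_iterate F a"
  let ?c = "K * (norm (F a) * K^n / fact (Suc n))"
  have int: "(\<lambda>s. F (?P m s)) integrable_on {0..t}" for m
    by (rule integrable_continuous_real[OF continuous_on_F_picard_iterate])
  have "?P (Suc m) t = a + integral {0..t} (\<lambda>s. F (?P m s))" for m
    by (simp add: picard_iterate_Suc)
  then have "norm (?P (Suc (Suc n)) t - ?P (Suc n) t)
      = norm (integral {0..t} (\<lambda>s. F (?P (Suc n) s) - F (?P n s)))"
    by (simp add: Henstock_Kurzweil_Integration.integral_diff[OF int int])
  also have "\<dots> \<le> integral {0..t} (\<lambda>s. ?c * s^(Suc n))"
  proof (rule integral_norm_bound_integral)
    show "(\<lambda>s. F (?P (Suc n) s) - F (?P n s)) integrable_on {0..t}"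
      by (rule integrable_diff[OF int int])
    show "(\<lambda>s. ?c * s^(Suc n)) integrable_on {0..t}"
      by (intro integrable_continuous_real continuous_intros)
    fix s assume s: "s \<in> {0..t}"
    have "norm (F (?P (Suc n) s) - F (?P n s)) \<le> K * norm (?P (Suc n) s - ?P n s)"
      using lipschitz_onD[OF lip] by (simp add: dist_norm)
    also have "\<dots> \<le> K * (norm (F a) * K^n * s^(Suc n) / fact (Suc n))"
      using Suc.IH[of s] s K by (intro mult_left_mono) auto
    finally show "norm (F (?P (Suc n) s) - F (?P n s)) \<le> ?c * s^(Suc n)"
      by (simp add: field_simps)
  qed
  also have "\<dots> = ?c * t^(Suc (Suc n)) / real (Suc (Suc n))"
    by (rule integral_monomial[OF Suc.prems])
  also have "\<dots> = norm (F a) * K^(Suc n) * t^(Suc (Suc n)) / fact (Suc (Suc n))"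
    by (simp add: field_simps fact_Suc[of "Suc n"] del: fact_Suc)
  finally show ?case .
qed

lemma picard_iterate_uniform_limit:
  obtains y where "\<And>R. 0 \<le> R \<Longrightarrow> uniform_limit {0..R} (picard_iterate F a) y sequentially"
proof -
  let ?P = "picard_iterate F a"
  define D where "D i t = ?P (Suc i) t - ?P i t" for i t
  define C where "C = norm (F a)"
  have tele: "?P n t = a + (\<Sum>i<n. D i t)" for n t
    unfolding D_def using sum_lessThan_telescope[of "\<lambda>i. ?P i t" n] by simp
  have "uniform_limit {0..R} ?P (\<lambda>t. a + (\<Sum>i. D i t)) sequentially" if R: "0 \<le> R" for R
  proof -
    define M where "M n = C * R * (inverse (fact n) * (K * R)^n)" for n
    have "summable M"
      unfolding M_def by (intro summable_mult summable_exp)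
    then have "uniform_limit {0..R} (\<lambda>n t. \<Sum>i<n. D i t) (\<lambda>t. \<Sum>i. D i t) sequentially"
    proof (rule Weierstrass_m_test[rotated])
      fix n t assume t: "t \<in> {0..R}"
      have "norm (D n t) \<le> C * K^n * t^(Suc n) / fact (Suc n)"
        using picard_iterate_diff_le[of t n] t by (simp add: D_def C_def)
      also have "\<dots> \<le> C * K^n * R^(Suc n) / fact n"
        using t K fact_mono[of n "Suc n", where 'a=real]
        by (intro frac_le mult_left_mono power_mono) (auto simp: C_def)
      also have "\<dots> = M n"
        by (simp add: M_def power_mult_distrib divide_inverse)
      finally show "norm (D n t) \<le> M n" .
    qed
    then have "uniform_limit {0..R} (\<lambda>n t. a + (\<Sum>i<n. D i t)) (\<lambda>t. a + (\<Sum>i. D i t)) sequentially"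
      by (intro uniform_limit_intros)
    then show ?thesis
      unfolding tele[symmetric] by (simp add: fun_eq_iff)
  qed
  then show ?thesis using that by blast
qed

lemma ode_forward_solution_exists:
  obtains y where "y 0 = a" "\<And>t. 0 \<le> t \<Longrightarrow> (y has_vector_derivative F (y t)) (at t within {0..})"
proof -
  let ?P = "picard_iterate F a"
  obtain y where ulim: "\<And>R. 0 \<le> R \<Longrightarrow> uniform_limit {0..R} ?P y sequentially"
    using picard_iterate_uniform_limit by blast
  have ulim_F: "uniform_limit {0..R} (\<lambda>n s. F (?P n s)) (F \<circ> y) sequentially" if "0 \<le> R" for R
    by (rule uniform_limit_compose[OF ulim[OF that] lipschitz_on_uniformly_continuous[OF lip]]) auto
  have cont_y: "continuous_on {0..R} y" if "0 \<le> R" for R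
    by (rule uniform_limit_theorem[OF _ ulim[OF that]])
       (auto intro: continuous_on_picard_iterate always_eventually)
  have y_eq: "y t = a + integral {0..t} (\<lambda>s. F (y s))" if t: "0 \<le> t" for t
  proof -
    obtain I J where I: "\<And>n. ((\<lambda>s. F (?P n s)) has_integral I n) {0..t}"
      and J: "((F \<circ> y) has_integral J) {0..t}" and IJ: "I \<longlonglongrightarrow> J"
      using uniform_limit_integral[OF ulim_F[OF t] continuous_on_F_picard_iterate] by auto
    have "(\<lambda>n. ?P (Suc n) t) \<longlonglongrightarrow> y t"
      using tendsto_uniform_limitI[OF ulim[OF t], of t] t LIMSEQ_Suc by auto
    moreover have "(\<lambda>n. ?P (Suc n) t) = (\<lambda>n. a + I n)"
      using I by (simp add: picard_iterate_Suc integral_unique fun_eq_iff)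
    moreover have "(\<lambda>n. a + I n) \<longlonglongrightarrow> a + J"
      using IJ by (intro tendsto_intros)
    ultimately have "y t = a + J"
      using LIMSEQ_unique by metis
    then show ?thesis
      using J by (simp add: integral_unique o_def)
  qed
  have "(y has_vector_derivative F (y t)) (at t within {0..})" if t: "0 \<le> t" for t
  proof -
    have "continuous_on {0..t + 1} (\<lambda>s. F (y s))"
      by (rule continuous_on_compose2[OF continuous_on_F cont_y]) (use t in auto)
    then have "((\<lambda>u. a + integral {0..u} (\<lambda>s. F (y s))) has_vector_derivative F (y t))
        (at t within {0..t + 1})"
      using integral_has_vector_derivative[of 0 "t + 1" "\<lambda>s. F (y s)" t] t
      by (auto intro!: derivative_eq_intros)
    then have "(y has_vector_derivative F (y t)) (at t within {0..t + 1})"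
      by (rule has_vector_derivative_transform[rotated 2]) (use t y_eq in auto)
    moreover have "at t within {0..t + 1} = at t within {0..}"
      by (rule at_within_nhd[of _ "{..<t + 1}"]) (use t in auto)
    ultimately show ?thesis by simp
  qed
  with y_eq[of 0] show ?thesis
    using that by simp
qed

end

lemma has_vector_derivative_within_Un:
  assumes "(f has_vector_derivative D) (at x within S)" "(f has_vector_derivative D) (at x within T)"
  shows "(f has_vector_derivative D) (at x within (S \<union> T))"
  using assms unfolding has_vector_derivative_def has_derivative_at_within Lim_within_Un by blast

lemma has_vector_derivative_reflect_within:
  assumes "(y has_vector_derivative D) (at (- t) within {0..})"
  shows "((\<lambda>s. y (- s)) has_vector_derivative - D) (at t within {..0})"
proof -
  have "uminus ` {..0} = {0::real..}"
    by (auto simp: image_iff intro: bexI[of _ "- x" for x])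
  then have "((y \<circ> uminus) has_vector_derivative (-1) *\<^sub>R D) (at t within {..0})"
    using assms by (intro vector_diff_chain_within) (auto intro!: derivative_eq_intros)
  then show ?thesis by (simp add: o_def)
qed

lemma ode_solution_exists:
  fixes F :: "'b::euclidean_space \<Rightarrow> 'b"
  assumes lip: "K-lipschitz_on UNIV F" and K: "0 < K"
  obtains y where "y 0 = a" "\<And>t. (y has_vector_derivative F (y t)) (at t)"
proof -
  have lip': "K-lipschitz_on UNIV (\<lambda>x. - F x)"
    using lip by (auto simp: lipschitz_on_def dist_minus)
  obtain yp where yp0: "yp 0 = a"
    and yp: "\<And>t. 0 \<le> t \<Longrightarrow> (yp has_vector_derivative F (yp t)) (at t within {0..})"
    using ode_forward_solution_exists[OF lip K] by blast
  obtain ym where ym0: "ym 0 = a"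
    and ym: "\<And>t. 0 \<le> t \<Longrightarrow> (ym has_vector_derivative - F (ym t)) (at t within {0..})"
    using ode_forward_solution_exists[OF lip' K] by blast
  define y where "y t = (if 0 \<le> t then yp t else ym (- t))" for t
  have right: "(y has_vector_derivative F (y t)) (at t within {0..})" if "0 \<le> t" for t
  proof -
    have "(y has_vector_derivative F (yp t)) (at t within {0..})"
      by (rule has_vector_derivative_transform[rotated 2, OF yp[OF that]]) (use that in \<open>auto simp: y_def\<close>)
    then show ?thesis using that by (simp add: y_def)
  qed
  have left: "(y has_vector_derivative F (y t)) (at t within {..0})" if "t \<le> 0" for t
  proof -
    have "((\<lambda>s. ym (- s)) has_vector_derivative F (ym (- t))) (at t within {..0})"
      using has_vector_derivative_reflect_within[OF ym[of "- t"]] that by simp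
    then have "(y has_vector_derivative F (ym (- t))) (at t within {..0})"
      by (rule has_vector_derivative_transform[rotated 2]) (use that in \<open>auto simp: y_def yp0 ym0\<close>)
    then show ?thesis using that yp0 ym0 by (cases "t = 0") (simp_all add: y_def)
  qed
  have "(y has_vector_derivative F (y t)) (at t)" for t
  proof (cases t "0::real" rule: linorder_cases)
    case less
    then show ?thesis using left[of t] at_within_interior[of t "{..0}"] by simp
  next
    case equal
    then have "(y has_vector_derivative F (y t)) (at t within ({0..} \<union> {..0}))"
      using has_vector_derivative_within_Un[OF right left] by simp
    moreover have "{0..} \<union> {..0::real} = UNIV" by auto
    ultimately show ?thesis by simp
  next
    case greater
    then show ?thesis using right[of t] at_within_interior[of t "{0..}"] by simp
  qed
  moreover have "y 0 = a" by (simp add: y_def yp0)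
  ultimately show ?thesis using that by blast
qed

section \<open>The Hamiltonian flow\<close>

lemma norm_diff_le_of_vector_derivative_bound:
  fixes f :: "real \<Rightarrow> 'a::real_normed_vector"
  assumes f: "\<And>s. (f has_vector_derivative f' s) (at s)"
    and bound: "\<And>s. 0 < s \<Longrightarrow> s < t \<Longrightarrow> norm (f' s) \<le> C" and t: "0 \<le> t"
  shows "norm (f t - f 0) \<le> C * t"
proof (cases "t = 0")
  case True
  then show ?thesis by simp
next
  case False
  with t have "0 < t" by simp
  have "norm (f t - f 0) \<le> C * t - C * 0"
  proof (rule differentiable_bound_general[OF \<open>0 < t\<close>, where f'=f' and \<phi>'="\<lambda>s. C"])
    show "continuous_on {0..t} f"
      using f by (meson continuous_at_imp_continuous_on has_vector_derivative_continuous)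
    show "((\<lambda>s. C * s) has_vector_derivative C) (at s)" for s
      by (auto intro!: derivative_eq_intros)
  qed (auto intro!: continuous_intros f bound)
  then show ?thesis by simp
qed

lemma flow_position_drift:
  fixes z w g :: "real \<Rightarrow> 'a::real_normed_vector"
  assumes dz: "\<And>t. (z has_vector_derivative w t) (at t)"
    and dw: "\<And>t. (w has_vector_derivative - g t) (at t)"
    and w0: "w 0 = 0" and g: "\<And>s. s \<in> {0..T} \<Longrightarrow> norm (g s) \<le> G"
    and t: "t \<in> {0..T}"
  shows "norm (z t - z 0) \<le> G * T^2"
proof -
  have "norm (g 0) \<le> G" using g t by simp
  then have G: "0 \<le> G" by (meson norm_ge_zero order_trans)
  have w: "norm (w s) \<le> G * T" if "s \<in> {0..T}" for s
  proof -
    have "norm (w s - w 0) \<le> G * s"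
      by (rule norm_diff_le_of_vector_derivative_bound[OF dw]) (use g that in auto)
    also have "\<dots> \<le> G * T" using G that by (intro mult_left_mono) auto
    finally show ?thesis using w0 by simp
  qed
  have "norm (z t - z 0) \<le> (G * T) * t"
    by (rule norm_diff_le_of_vector_derivative_bound[OF dz]) (use w t in auto)
  also have "\<dots> \<le> (G * T) * T" using G t by (intro mult_left_mono) auto
  finally show ?thesis by (simp add: power2_eq_square mult.assoc)
qed

lemma flow_lyapunov_rate_nonpos:
  fixes z w g :: "'a::real_inner"
  assumes s: "0 \<le> s" and L: "0 < L" and Ls: "L * s^2 \<le> 1/20"
    and coc: "(norm g)^2 \<le> L * (g \<bullet> z)" and c0: "c0 \<le> g \<bullet> z"
  shows "- 2 * s * (g \<bullet> z) - 2 * (s^2 + L/3 * s^4) * (w \<bullet> g) - 4 * L / 3 * s^3 * (norm w)^2 + c0 * s \<le> 0"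
proof (cases "s = 0")
  case True
  then show ?thesis by simp
next
  case False
  with s have s: "0 < s" by simp
  define \<beta> where "\<beta> = s^2 + L/3 * s^4"
  have e: "0 < s / L" using s L by simp
  have "- (2 * \<beta>) * (w \<bullet> g) \<le> s / L * (norm g)^2 + (2 * \<beta>)^2 * (norm w)^2 / (4 * (s / L))"
    by (rule neg_inner_le_amgm[OF e]) (use s L in \<open>simp add: \<beta>_def\<close>)
  moreover have "(2 * \<beta>)^2 * (norm w)^2 / (4 * (s / L)) \<le> 4 * L / 3 * s^3 * (norm w)^2"
  proof -
    have "\<beta> = s^2 * (1 + L * s^2 / 3)"
      by (simp add: \<beta>_def power2_eq_square power4_eq_xxxx algebra_simps)
    moreover have "(1 + L * s^2 / 3)^2 \<le> (1 + 1/60)^2"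
      using Ls L by (intro power_mono) auto
    ultimately have "\<beta>^2 \<le> (s^2)^2 * (1 + 1/60)^2"
      by (simp add: power_mult_distrib mult_left_mono)
    also have "\<dots> \<le> (s^2)^2 * (4/3)"
      by (intro mult_left_mono) (auto simp: power2_eq_square)
    finally have "\<beta>^2 \<le> 4/3 * s^4"
      by (simp flip: power_mult)
    then have "L * \<beta>^2 * (norm w)^2 / s \<le> L * (4/3 * s^4) * (norm w)^2 / s"
      using L s by (intro divide_right_mono mult_right_mono mult_left_mono) auto
    then show ?thesis
      using s L by (simp add: field_simps power2_eq_square power3_eq_cube power4_eq_xxxx)
  qed
  moreover have "s / L * (norm g)^2 \<le> s * (g \<bullet> z)"
    using mult_left_mono[OF coc, of "s / L"] e L by simp
  moreover have "c0 * s \<le> s * (g \<bullet> z)"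
    using mult_right_mono[OF c0, of s] s by (simp add: mult.commute)
  ultimately show ?thesis
    unfolding \<beta>_def by (simp add: algebra_simps)
qed

definition flow_lyapunov :: "real \<Rightarrow> real \<Rightarrow> real \<Rightarrow> 'a::real_inner \<Rightarrow> 'a \<Rightarrow> real" where
  "flow_lyapunov L c s z w = (norm (z + s *\<^sub>R w))^2 + L/3 * s^4 * (norm w)^2 - c * s^2 / 2"

lemma has_real_derivative_flow_lyapunov:
  fixes z w g :: "real \<Rightarrow> 'a::real_inner"
  assumes dz: "(z has_vector_derivative w t) (at t)" and dw: "(w has_vector_derivative - g t) (at t)"
  shows "((\<lambda>t. flow_lyapunov L c (T - t) (z t) (w t)) has_real_derivative
      - 2 * (T - t) * (g t \<bullet> z t) - 2 * ((T - t)^2 + L/3 * (T - t)^4) * (w t \<bullet> g t)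
      - 4 * L / 3 * (T - t)^3 * (norm (w t))^2 + c * (T - t)) (at t)"
proof -
  have "((\<lambda>t. z t + (T - t) *\<^sub>R w t) has_vector_derivative - ((T - t) *\<^sub>R g t)) (at t)"
    by (rule derivative_eq_intros dz dw refl | simp)+
  note d1 = has_real_derivative_norm_sq[OF this] and d2 = has_real_derivative_norm_sq[OF dw]
  have "((\<lambda>t. flow_lyapunov L c (T - t) (z t) (w t)) has_real_derivative
      2 * ((z t + (T - t) *\<^sub>R w t) \<bullet> - ((T - t) *\<^sub>R g t))
      + (L/3 * (real 4 * (T - t)^3 * (0 - 1)) * (norm (w t))^2
         + L/3 * (T - t)^4 * (2 * (w t \<bullet> - g t)))
      - c * (real 2 * (T - t) * (0 - 1)) / 2) (at t)"
    unfolding flow_lyapunov_def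
    by (rule derivative_eq_intros d1 d2 refl | simp add: field_simps)+
  moreover have "2 * ((z t + (T - t) *\<^sub>R w t) \<bullet> - ((T - t) *\<^sub>R g t))
      + (L/3 * (real 4 * (T - t)^3 * (0 - 1)) * (norm (w t))^2
         + L/3 * (T - t)^4 * (2 * (w t \<bullet> - g t)))
      - c * (real 2 * (T - t) * (0 - 1)) / 2
    = - 2 * (T - t) * (g t \<bullet> z t) - 2 * ((T - t)^2 + L/3 * (T - t)^4) * (w t \<bullet> g t)
      - 4 * L / 3 * (T - t)^3 * (norm (w t))^2 + c * (T - t)"
    by (simp add: inner_add_left inner_commute[of "z t"] algebra_simps power2_eq_square)
       (simp add: field_simps)
  ultimately show ?thesis by simp
qed

lemma flow_lyapunov_decrease:
  fixes z w g :: "real \<Rightarrow> 'a::real_inner"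
  assumes dz: "\<And>t. (z has_vector_derivative w t) (at t)"
    and dw: "\<And>t. (w has_vector_derivative - g t) (at t)"
    and coc: "\<And>t. (norm (g t))^2 \<le> L * (g t \<bullet> z t)"
    and c: "\<And>t. t \<in> {0..T} \<Longrightarrow> c \<le> g t \<bullet> z t"
    and T: "0 \<le> T" and LT: "L * T^2 \<le> 1/20" and L: "0 < L"
  shows "flow_lyapunov L c 0 (z T) (w T) \<le> flow_lyapunov L c T (z 0) (w 0)"
proof -
  define U where "U t = flow_lyapunov L c (T - t) (z t) (w t)" for t
  have "U T \<le> U 0"
  proof (rule DERIV_nonpos_imp_nonincreasing[OF T])
    fix t assume t: "0 \<le> t" "t \<le> T"
    have "L * (T - t)^2 \<le> L * T^2"
      using t L by (intro mult_left_mono power_mono) auto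
    then have "L * (T - t)^2 \<le> 1/20"
      using LT by linarith
    from flow_lyapunov_rate_nonpos[OF _ L this coc[of t] c[of t]]
    have "- 2 * (T - t) * (g t \<bullet> z t) - 2 * ((T - t)^2 + L/3 * (T - t)^4) * (w t \<bullet> g t)
      - 4 * L / 3 * (T - t)^3 * (norm (w t))^2 + c * (T - t) \<le> 0"
      using t by simp
    then show "\<exists>y. (U has_real_derivative y) (at t) \<and> y \<le> 0"
      unfolding U_def[abs_def]
      using has_real_derivative_flow_lyapunov[where z=z and w=w and g=g and t=t, OF dz dw] by blast
  qed
  then show ?thesis by (simp add: U_def)
qed

lemma flow_contraction_sq:
  fixes z w g :: "real \<Rightarrow> 'a::real_inner"
  assumes dz: "\<And>t. (z has_vector_derivative w t) (at t)"
    and dw: "\<And>t. (w has_vector_derivative - g t) (at t)"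
    and w0: "w 0 = 0" and coc: "\<And>t. (norm (g t))^2 \<le> L * (g t \<bullet> z t)"
    and lip: "\<And>t. norm (g t) \<le> L * norm (z t)"
    and strong: "\<And>t. \<alpha> * (norm (z t))^2 \<le> g t \<bullet> z t"
    and T: "0 < T" and LT: "L * T^2 \<le> 1/20" and \<alpha>: "0 < \<alpha>" and L: "0 < L"
  shows "(norm (z T))^2 \<le> (1 - \<alpha> * T^2 / 5) * (norm (z 0))^2"
proof -
  obtain k where k: "k \<in> {0..T}" "\<And>s. s \<in> {0..T} \<Longrightarrow> norm (z s) \<le> norm (z k)"
  proof -
    have "continuous_on {0..T} z"
      using dz by (meson continuous_at_imp_continuous_on has_vector_derivative_continuous)
    then have "continuous_on {0..T} (\<lambda>s. norm (z s))"
      by (rule continuous_on_norm)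
    then show thesis
      using continuous_attains_sup[of "{0..T}" "\<lambda>s. norm (z s)"] T that by auto
  qed
  have "norm (z t - z 0) \<le> 3/40 * norm (z k)" if "t \<in> {0..T}" for t
  proof -
    have "norm (g s) \<le> L * norm (z k)" if "s \<in> {0..T}" for s
      using lip[of s] mult_left_mono[OF k(2)[OF that] less_imp_le[OF L]] by linarith
    then have "norm (z t - z 0) \<le> L * norm (z k) * T^2"
      by (rule flow_position_drift[OF dz dw w0 _ that])
    also have "\<dots> \<le> 1/20 * norm (z k)"
      using mult_right_mono[OF LT, of "norm (z k)"] by (simp add: algebra_simps)
    finally show ?thesis
      using norm_ge_zero[of "z k"] by linarith
  qed
  then have "\<alpha> * (4/5 * (norm (z 0))^2) \<le> g t \<bullet> z t" if "t \<in> {0..T}" for t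
    using norm_sq_ge_of_small_drift[of "{0..T}" z "z 0" k t] k(1) that strong[of t] \<alpha>
    by (smt (verit) mult_left_mono)
  from flow_lyapunov_decrease[OF dz dw coc this _ LT L] T w0
  have "(norm (z T))^2 \<le> (norm (z 0))^2 - \<alpha> * (4/5 * (norm (z 0))^2) * T^2 / 2"
    by (simp add: flow_lyapunov_def)
  also have "\<dots> \<le> (1 - \<alpha> * T^2 / 5) * (norm (z 0))^2"
    using \<alpha> by (simp add: algebra_simps)
  finally show ?thesis .
qed

section \<open>Contraction of the position map\<close>

lemma has_vector_derivative_fst:
  "(f has_vector_derivative D) F \<Longrightarrow> ((\<lambda>t. fst (f t)) has_vector_derivative fst D) F"
  unfolding has_vector_derivative_def by (drule has_derivative_fst) simp

lemma has_vector_derivative_snd: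
  "(f has_vector_derivative D) F \<Longrightarrow> ((\<lambda>t. snd (f t)) has_vector_derivative snd D) F"
  unfolding has_vector_derivative_def by (drule has_derivative_snd) simp

context smooth_strongly_convex
begin

lemma contraction_factor_bounds:
  assumes "L * T^2 \<le> 1/20"
  shows "0 \<le> \<alpha> * T^2" "\<alpha> * T^2 \<le> 1/20"
proof -
  show "0 \<le> \<alpha> * T^2" using alpha_pos by simp
  have "\<alpha> * T^2 \<le> L * T^2" using alpha_le_L by (intro mult_right_mono) auto
  then show "\<alpha> * T^2 \<le> 1/20" using assms by linarith
qed

lemma leapfrog_contraction:
  assumes h: "0 < h" and NT: "real N * h = T" and LT: "L * T^2 \<le> 1/20"
  shows "norm (fst ((leap_step grad h ^^ N) (x, v)) - fst ((leap_step grad h ^^ N) (y, v)))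
         \<le> (1 - \<alpha> * T^2 / 10) * norm (x - y)"
proof -
  define X where "X j = (leap_step grad h ^^ j) (x, v)" for j
  define Y where "Y j = (leap_step grad h ^^ j) (y, v)" for j
  define z where "z j = fst (X j) - fst (Y j)" for j
  define w where "w j = snd (X j) - snd (Y j)" for j
  define g where "g j = grad (fst (X j)) - grad (fst (Y j))" for j
  have XS: "fst (X (Suc j)) = fst (X j) + h *\<^sub>R snd (X j) - (h^2/2) *\<^sub>R grad (fst (X j))"
    "snd (X (Suc j)) = snd (X j) - (h/2) *\<^sub>R (grad (fst (X j)) + grad (fst (X (Suc j))))" for j
    unfolding X_def by (simp_all add: leap_step_def Let_def)
  have YS: "fst (Y (Suc j)) = fst (Y j) + h *\<^sub>R snd (Y j) - (h^2/2) *\<^sub>R grad (fst (Y j))"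
    "snd (Y (Suc j)) = snd (Y j) - (h/2) *\<^sub>R (grad (fst (Y j)) + grad (fst (Y (Suc j))))" for j
    unfolding Y_def by (simp_all add: leap_step_def Let_def)
  have rz: "z (Suc j) = z j + h *\<^sub>R w j - (h^2/2) *\<^sub>R g j" for j
    unfolding z_def w_def g_def XS YS by (simp add: algebra_simps)
  have rw: "w (Suc j) = w j - (h/2) *\<^sub>R (g j + g (Suc j))" for j
    unfolding w_def g_def XS(2) YS(2) by (simp add: algebra_simps)
  have w0: "w 0 = 0" by (simp add: w_def X_def Y_def)
  have "(norm (g j))^2 \<le> L * (g j \<bullet> z j)" "norm (g j) \<le> L * norm (z j)"
    "\<alpha> * (norm (z j))^2 \<le> g j \<bullet> z j" for j
    unfolding g_def z_def by (rule grad_cocoercive grad_lipschitz grad_strongly_monotone)+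
  from leap_contraction_sq[OF rz rw w0 this h NT LT alpha_pos L_pos]
  have "norm (z N) \<le> (1 - \<alpha> * T^2 / 10) * norm (z 0)"
    by (rule contraction_of_sq_contraction) (use contraction_factor_bounds[OF LT] in auto)
  then show ?thesis by (simp add: z_def X_def Y_def)
qed

definition ham_field :: "'a \<times> 'a \<Rightarrow> 'a \<times> 'a" where
  "ham_field p = (snd p, - grad (fst p))"

lemma lipschitz_on_ham_field: "(1 + L)-lipschitz_on UNIV ham_field"
proof (rule lipschitz_onI)
  fix p q :: "'a \<times> 'a"
  have "dist (ham_field p) (ham_field q) \<le> norm (snd p - snd q) + norm (grad (fst p) - grad (fst q))"
    using norm_Pair_le[of "snd p - snd q" "- (grad (fst p) - grad (fst q))"]
    by (simp add: ham_field_def dist_norm norm_minus_commute)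
  also have "\<dots> \<le> dist p q + L * dist p q"
  proof (rule add_mono)
    show "norm (snd p - snd q) \<le> dist p q"
      using dist_snd_le[of p q] by (simp add: dist_norm)
    show "norm (grad (fst p) - grad (fst q)) \<le> L * dist p q"
    proof -
      have "L * norm (fst p - fst q) \<le> L * dist p q"
        using dist_fst_le[of p q] L_pos by (intro mult_left_mono) (auto simp: dist_norm)
      then show ?thesis
        using grad_lipschitz[of "fst p" "fst q"] by linarith
    qed
  qed
  finally show "dist (ham_field p) (ham_field q) \<le> (1 + L) * dist p q"
    by (simp add: algebra_simps)
qed (use L_pos in simp)

definition ham_solution :: "'a \<times> 'a \<Rightarrow> real \<Rightarrow> 'a \<times> 'a" where
  "ham_solution p = (THE z. z 0 = p \<and> (\<forall>t. (z has_vector_derivative (snd (z t), - grad (fst (z t)))) (at t)))"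

lemma ham_solution_ex1:
  "\<exists>!z. z 0 = p \<and> (\<forall>t. (z has_vector_derivative (snd (z t), - grad (fst (z t)))) (at t))"
proof -
  have "0 < 1 + L" using L_pos by simp
  then obtain y where y0: "y 0 = p" and y: "\<And>t. (y has_vector_derivative ham_field (y t)) (at t)"
    using ode_solution_exists[OF lipschitz_on_ham_field] by blast
  show ?thesis
  proof (rule ex1I[of _ y])
    fix z
    assume "z 0 = p \<and> (\<forall>t. (z has_vector_derivative (snd (z t), - grad (fst (z t)))) (at t))"
    then have "z 0 = y 0" "\<And>t. (z has_vector_derivative ham_field (z t)) (at t)"
      using y0 by (simp_all add: ham_field_def)
    from ode_solution_unique[OF this(2) y lipschitz_on_ham_field this(1)] show "z = y" .
  qed (use y0 y in \<open>simp add: ham_field_def\<close>)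
qed

lemma ham_solution: "ham_solution p 0 = p"
  "(ham_solution p has_vector_derivative ham_field (ham_solution p t)) (at t)"
  using theI'[OF ham_solution_ex1[of p]] unfolding ham_solution_def[symmetric]
  by (auto simp: ham_field_def)

lemma ham_flow_eq: "ham_flow grad T x v = fst (ham_solution (x, v) T)"
  by (simp add: ham_flow_def ham_solution_def)

lemma continuous_on_ham_flow:
  assumes "0 \<le> T"
  shows "continuous_on UNIV (\<lambda>p. ham_flow grad T (fst p) (snd p))"
proof (rule lipschitz_on_continuous_on[of "exp ((1 + L) * T)"], rule lipschitz_onI)
  fix p q :: "'a \<times> 'a"
  have "(norm (ham_solution p T - ham_solution q T))^2
      \<le> exp (2 * (1 + L) * T) * (norm (ham_solution p 0 - ham_solution q 0))^2"
    by (rule ode_solutions_dist_sq_le[OF ham_solution(2) ham_solution(2) lipschitz_on_ham_field assms])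
  also have "\<dots> = (exp ((1 + L) * T) * dist p q)^2"
    by (simp add: ham_solution dist_norm power_mult_distrib exp_double[symmetric] mult.assoc)
  finally have "dist (ham_solution p T) (ham_solution q T) \<le> exp ((1 + L) * T) * dist p q"
    unfolding dist_norm by (rule power2_le_imp_le) simp
  then show "dist (ham_flow grad T (fst p) (snd p)) (ham_flow grad T (fst q) (snd q))
      \<le> exp ((1 + L) * T) * dist p q"
    using dist_fst_le[of "ham_solution p T" "ham_solution q T"] by (simp add: ham_flow_eq)
qed simp

lemma ham_flow_contraction:
  assumes T: "0 < T" and LT: "L * T^2 \<le> 1/20"
  shows "norm (ham_flow grad T x v - ham_flow grad T y v) \<le> (1 - \<alpha> * T^2 / 10) * norm (x - y)"
proof -
  define X where "X = ham_solution (x, v)"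
  define Y where "Y = ham_solution (y, v)"
  define z where "z t = fst (X t) - fst (Y t)" for t
  define w where "w t = snd (X t) - snd (Y t)" for t
  define g where "g t = grad (fst (X t)) - grad (fst (Y t))" for t
  have dX: "(X has_vector_derivative ham_field (X t)) (at t)"
    and dY: "(Y has_vector_derivative ham_field (Y t)) (at t)" for t
    unfolding X_def Y_def by (rule ham_solution)+
  have dz: "(z has_vector_derivative w t) (at t)" for t
    unfolding z_def[abs_def] w_def
    using has_vector_derivative_fst[OF dX[of t]] has_vector_derivative_fst[OF dY[of t]]
    by (auto intro!: derivative_eq_intros simp: ham_field_def)
  have dw: "(w has_vector_derivative - g t) (at t)" for t
    unfolding w_def[abs_def] g_def
    using has_vector_derivative_snd[OF dX[of t]] has_vector_derivative_snd[OF dY[of t]]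
    by (auto intro!: derivative_eq_intros simp: ham_field_def)
  have w0: "w 0 = 0" by (simp add: w_def X_def Y_def ham_solution)
  have "(norm (g t))^2 \<le> L * (g t \<bullet> z t)" "norm (g t) \<le> L * norm (z t)"
    "\<alpha> * (norm (z t))^2 \<le> g t \<bullet> z t" for t
    unfolding g_def z_def by (rule grad_cocoercive grad_lipschitz grad_strongly_monotone)+
  from flow_contraction_sq[OF dz dw w0 this T LT alpha_pos L_pos]
  have "norm (z T) \<le> (1 - \<alpha> * T^2 / 10) * norm (z 0)"
    by (rule contraction_of_sq_contraction) (use contraction_factor_bounds[OF LT] in auto)
  then show ?thesis
    by (simp add: z_def X_def Y_def ham_flow_eq ham_solution)
qed

lemma q_th_contraction:
  assumes T: "0 < T" and LT: "L * T^2 \<le> 1/20"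
    and h: "0 \<le> h" "0 < h \<Longrightarrow> (\<exists>N::nat. T = real N * h)"
  shows "norm (q_th grad T h x v - q_th grad T h y v) \<le> (1 - \<alpha> * T^2 / 10) * norm (x - y)"
proof (cases "h = 0")
  case True
  then show ?thesis
    using ham_flow_contraction[OF T LT] by (simp add: q_th_def)
next
  case False
  with h obtain N :: nat where "T = real N * h" "0 < h" by force
  moreover from this have "nat \<lfloor>T / h\<rfloor> = N" by simp
  ultimately show ?thesis
    using leapfrog_contraction[of h N T x v y] LT False by (simp add: q_th_def)
qed

lemma isCont_leap_step_iterate: "isCont (leap_step grad h ^^ n) z"
proof (induction n arbitrary: z)
  case 0
  then show ?case by simp
next
  case (Suc n)
  have "isCont (leap_step grad h) z" for z
    unfolding leap_step_def Let_def by (auto intro!: continuous_intros isCont_o2[OF _ isCont_grad])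
  then show ?case
    unfolding funpow.simps(2) by (rule continuous_at_compose[OF Suc.IH])
qed

lemma continuous_on_q_th:
  assumes "0 < T"
  shows "continuous_on UNIV (\<lambda>p. q_th grad T h (fst p) (snd p))"
proof (cases "h = 0")
  case True
  then show ?thesis
    using continuous_on_ham_flow[of T] assms by (simp add: q_th_def)
next
  case False
  then have "(\<lambda>p. q_th grad T h (fst p) (snd p)) = (\<lambda>p. fst ((leap_step grad h ^^ nat \<lfloor>T / h\<rfloor>) p))"
    by (simp add: q_th_def fun_eq_iff)
  then show ?thesis
    by (auto intro!: continuous_at_imp_continuous_on continuous_intros isCont_leap_step_iterate
        isCont_o2[OF isCont_leap_step_iterate])
qed


lemma borel_measurable_q_th:
  assumes "0 < T"
  shows "(\<lambda>(x, v). q_th grad T h x v) \<in> borel_measurable (borel \<Otimes>\<^sub>M borel)"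
proof -
  have "(\<lambda>(x, v). q_th grad T h x v) = (\<lambda>p. q_th grad T h (fst p) (snd p))"
    by (simp add: split_beta')
  then show ?thesis
    using borel_measurable_continuous_onI[OF continuous_on_q_th[OF assms]] by (simp add: borel_prod)
qed
end

section \<open>Synchronous coupling\<close>

lemma std_gauss_density_eq_prod:
  fixes v :: "'a::euclidean_space"
  shows "(2 * pi) powr (- real DIM('a) / 2) * exp (- ((norm v)^2) / 2)
       = (\<Prod>b\<in>Basis. std_normal_density (v \<bullet> b))"
proof -
  have "(norm v)^2 = (\<Sum>b\<in>Basis. (v \<bullet> b) * (v \<bullet> b))"
    unfolding power2_norm_eq_inner by (rule euclidean_inner)
  then have "(norm v)^2 = (\<Sum>b\<in>Basis. (v \<bullet> b)^2)"
    by (simp add: power2_eq_square)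
  then have e: "exp (- ((norm v)^2) / 2) = (\<Prod>b\<in>Basis. exp (- ((v \<bullet> b)^2) / 2))"
    by (simp add: exp_sum[symmetric] sum_negf sum_divide_distrib)
  have "(2 * pi) powr (- real DIM('a) / 2) = ((2 * pi) powr (1/2)) powr (- real DIM('a))"
    by (simp add: powr_powr)
  also have "\<dots> = (1 / sqrt (2 * pi)) powr (real DIM('a))"
    by (simp add: powr_half_sqrt powr_minus_divide powr_divide)
  also have "\<dots> = (1 / sqrt (2 * pi)) ^ DIM('a)"
    by (rule powr_realpow) simp
  finally show ?thesis
    unfolding e std_normal_density_def prod.distrib by simp
qed

lemma prob_space_std_gauss: "prob_space (std_gauss :: 'a::euclidean_space measure)"
proof
  have "emeasure (std_gauss :: 'a measure) (space std_gauss)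
      = (\<integral>\<^sup>+ v. (\<Prod>b\<in>Basis. ennreal (std_normal_density (v \<bullet> b))) \<partial>(lborel :: 'a measure))"
    unfolding std_gauss_def std_gauss_density_eq_prod by (simp add: emeasure_density prod_ennreal)
  also have "\<dots> = (\<Prod>b\<in>(Basis :: 'a set). (\<integral>\<^sup>+ x. ennreal (std_normal_density x) \<partial>lborel))"
    by (rule nn_integral_lborel_prod) auto
  also have "(\<integral>\<^sup>+ x. ennreal (std_normal_density x) \<partial>lborel) = 1"
    using prob_space.emeasure_space_1[OF prob_space_normal_density[of 1 0]]
    by (simp add: emeasure_density)
  finally show "emeasure (std_gauss :: 'a measure) (space std_gauss) = 1"
    by simp
qed

lemma sets_std_gauss [measurable_cong]: "sets (std_gauss :: 'a::euclidean_space measure) = sets borel"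
  by (simp add: std_gauss_def)

lemma psi_norm_le_cmult:
  fixes Z :: "'b \<Rightarrow> 'a::real_normed_vector" and Z' :: "'c \<Rightarrow> 'a"
  assumes c: "0 < c"
    and scale: "\<And>l. 0 < l \<Longrightarrow> (\<integral>\<^sup>+ w. ennreal (exp ((norm (Z w))^2 / l^2)) \<partial>M) \<le> 2
      \<Longrightarrow> (\<integral>\<^sup>+ w. ennreal (exp ((norm (Z' w))^2 / (c * l)^2)) \<partial>M') \<le> 2"
  shows "psi_norm M' Z' \<le> ereal c * psi_norm M Z"
proof -
  let ?A = "\<lambda>M Z. {ereal l | l. l > 0 \<and> (\<integral>\<^sup>+ w. ennreal (exp ((norm (Z w))^2 / l^2)) \<partial>M) \<le> 2}"
  have "psi_norm M' Z' \<le> Inf {ereal c * x | x. x \<in> ?A M Z}"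
  proof (rule Inf_greatest)
    fix y assume "y \<in> {ereal c * x | x. x \<in> ?A M Z}"
    then obtain l where "y = ereal c * ereal l" and l: "0 < l"
      "(\<integral>\<^sup>+ w. ennreal (exp ((norm (Z w))^2 / l^2)) \<partial>M) \<le> 2"
      by blast
    then have y: "y = ereal (c * l)" by simp
    have "ereal (c * l) \<in> ?A M' Z'"
      using scale[OF l] c l by auto
    then show "psi_norm M' Z' \<le> y"
      unfolding psi_norm_def y by (rule Inf_lower)
  qed
  also have "Inf {ereal c * x | x. x \<in> ?A M Z} = ereal c * psi_norm M Z"
    unfolding psi_norm_def using ereal_Inf_cmult[OF c, of "\<lambda>x. x \<in> ?A M Z"] by simp
  finally show ?thesis .
qed

locale gaussian_kernel_contraction =
  fixes Q :: "'a::euclidean_space \<times> 'a \<Rightarrow> 'a" and c :: real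
  assumes Q_measurable [measurable]: "Q \<in> borel_measurable (borel \<Otimes>\<^sub>M borel)"
    and Q_contraction: "\<And>x y v. norm (Q (x, v) - Q (y, v)) \<le> c * norm (x - y)"
    and c_pos: "0 < c"
begin

definition kernel :: "'a measure \<Rightarrow> 'a measure" where
  "kernel \<rho> = distr (\<rho> \<Otimes>\<^sub>M std_gauss) borel Q"

definition sync_coupling :: "('a \<times> 'a) measure \<Rightarrow> ('a \<times> 'a) measure" where
  "sync_coupling \<gamma> = distr (\<gamma> \<Otimes>\<^sub>M std_gauss) (borel \<Otimes>\<^sub>M borel)
     (\<lambda>(p, v). (Q (fst p, v), Q (snd p, v)))"

lemma distr_sync_coupling_marginal:
  fixes \<gamma> :: "('a \<times> 'a) measure" and sel :: "'a \<times> 'a \<Rightarrow> 'a"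
  assumes s: "sets \<gamma> = sets (borel \<Otimes>\<^sub>M borel)" and sel: "sel \<in> (borel \<Otimes>\<^sub>M borel) \<rightarrow>\<^sub>M borel"
  shows "distr (\<gamma> \<Otimes>\<^sub>M std_gauss) borel (\<lambda>(p, v). Q (sel p, v)) = kernel (distr \<gamma> borel sel)"
proof -
  have sel': "sel \<in> \<gamma> \<rightarrow>\<^sub>M borel"
    using sel by (simp add: measurable_cong_sets[OF s refl])
  have G: "distr (std_gauss :: 'a measure) borel (\<lambda>x. x) = std_gauss"
    by (rule distr_id2) (simp add: sets_std_gauss)
  have "distr \<gamma> borel sel \<Otimes>\<^sub>M distr (std_gauss :: 'a measure) borel (\<lambda>x. x)
      = distr (\<gamma> \<Otimes>\<^sub>M std_gauss) (borel \<Otimes>\<^sub>M borel) (\<lambda>(p, v). (sel p, v))"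
    by (rule pair_measure_distr[OF sel' measurable_ident_sets[OF sets_std_gauss]])
       (rule prob_space_imp_sigma_finite[OF prob_space.prob_space_distr[OF prob_space_std_gauss
          measurable_ident_sets[OF sets_std_gauss]]])
  then have pm: "distr (\<gamma> \<Otimes>\<^sub>M std_gauss) (borel \<Otimes>\<^sub>M borel) (\<lambda>(p, v). (sel p, v))
      = distr \<gamma> borel sel \<Otimes>\<^sub>M (std_gauss :: 'a measure)"
    by (simp add: G)
  have "(\<lambda>(p, v). (sel p, v)) \<in> (\<gamma> \<Otimes>\<^sub>M std_gauss) \<rightarrow>\<^sub>M (borel \<Otimes>\<^sub>M borel)"
    using sel' by (auto simp: split_beta' intro!: measurable_Pair measurable_compose[OF measurable_fst]
        measurable_compose[OF measurable_snd measurable_ident_sets[OF sets_std_gauss]])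
  then have "distr (\<gamma> \<Otimes>\<^sub>M std_gauss) borel (\<lambda>(p, v). Q (sel p, v))
      = distr (distr (\<gamma> \<Otimes>\<^sub>M std_gauss) (borel \<Otimes>\<^sub>M borel) (\<lambda>(p, v). (sel p, v))) borel Q"
    by (subst distr_distr[OF Q_measurable]) (simp_all add: o_def split_beta')
  then show ?thesis
    unfolding kernel_def pm .
qed

lemma sync_coupling_couplings:
  assumes "\<gamma> \<in> couplings \<mu> \<pi>"
  shows "sync_coupling \<gamma> \<in> couplings (kernel \<mu>) (kernel \<pi>)"
proof -
  have \<gamma>: "prob_space \<gamma>" "sets \<gamma> = sets (borel \<Otimes>\<^sub>M borel)"
    and marginals: "distr \<gamma> borel fst = \<mu>" "distr \<gamma> borel snd = \<pi>"
    using assms by (auto simp: couplings_def)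
  have m: "(\<lambda>(p, v). (Q (fst p, v), Q (snd p, v))) \<in> (\<gamma> \<Otimes>\<^sub>M std_gauss) \<rightarrow>\<^sub>M (borel \<Otimes>\<^sub>M borel)"
    by (subst measurable_cong_sets[OF sets_pair_measure_cong[OF \<gamma>(2) sets_std_gauss] refl])
       measurable
  have "prob_space (sync_coupling \<gamma>)"
    unfolding sync_coupling_def
    by (rule prob_space.prob_space_distr[OF prob_space_pair[OF \<gamma>(1) prob_space_std_gauss] m])
  moreover have "distr (sync_coupling \<gamma>) borel fst = kernel \<mu>"
  proof -
    have "distr (sync_coupling \<gamma>) borel fst = distr (\<gamma> \<Otimes>\<^sub>M std_gauss) borel (\<lambda>(p, v). Q (fst p, v))"
      unfolding sync_coupling_def by (subst distr_distr[OF measurable_fst m]) (simp add: o_def split_beta')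
    then show ?thesis
      using distr_sync_coupling_marginal[OF \<gamma>(2) measurable_fst] marginals(1) by simp
  qed
  moreover have "distr (sync_coupling \<gamma>) borel snd = kernel \<pi>"
  proof -
    have "distr (sync_coupling \<gamma>) borel snd = distr (\<gamma> \<Otimes>\<^sub>M std_gauss) borel (\<lambda>(p, v). Q (snd p, v))"
      unfolding sync_coupling_def by (subst distr_distr[OF measurable_snd m]) (simp add: o_def split_beta')
    then show ?thesis
      using distr_sync_coupling_marginal[OF \<gamma>(2) measurable_snd] marginals(2) by simp
  qed
  ultimately show ?thesis
    unfolding couplings_def by (simp add: sync_coupling_def)
qed

lemma nn_integral_sync_coupling_le:
  assumes s: "sets \<gamma> = sets (borel \<Otimes>\<^sub>M borel)" and l: "0 < l"
  shows "(\<integral>\<^sup>+ w. ennreal (exp ((norm (fst w - snd w))^2 / (c * l)^2)) \<partial>sync_coupling \<gamma>)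
    \<le> (\<integral>\<^sup>+ w. ennreal (exp ((norm (fst w - snd w))^2 / l^2)) \<partial>\<gamma>)"
proof -
  have s': "sets (\<gamma> \<Otimes>\<^sub>M std_gauss) = sets ((borel \<Otimes>\<^sub>M borel) \<Otimes>\<^sub>M (borel :: 'a measure))"
    by (rule sets_pair_measure_cong[OF s sets_std_gauss])
  have m: "(\<lambda>(p, v). (Q (fst p, v), Q (snd p, v))) \<in> (\<gamma> \<Otimes>\<^sub>M std_gauss) \<rightarrow>\<^sub>M (borel \<Otimes>\<^sub>M borel)"
    by (subst measurable_cong_sets[OF s' refl]) measurable
  have "(\<integral>\<^sup>+ w. ennreal (exp ((norm (fst w - snd w))^2 / (c * l)^2)) \<partial>sync_coupling \<gamma>)
      = (\<integral>\<^sup>+ u. ennreal (exp ((norm (Q (fst (fst u), snd u) - Q (snd (fst u), snd u)))^2 / (c * l)^2))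
          \<partial>(\<gamma> \<Otimes>\<^sub>M std_gauss))"
    unfolding sync_coupling_def by (subst nn_integral_distr[OF m]) (simp_all add: split_beta')
  also have "\<dots> \<le> (\<integral>\<^sup>+ u. ennreal (exp ((norm (fst (fst u) - snd (fst u)))^2 / l^2))
      \<partial>(\<gamma> \<Otimes>\<^sub>M (std_gauss :: 'a measure)))"
  proof (rule nn_integral_mono)
    fix u :: "('a \<times> 'a) \<times> 'a"
    have "(norm (Q (fst (fst u), snd u) - Q (snd (fst u), snd u)))^2 \<le> (c * norm (fst (fst u) - snd (fst u)))^2"
      using Q_contraction by (intro power_mono) auto
    then have "(norm (Q (fst (fst u), snd u) - Q (snd (fst u), snd u)))^2 / (c * l)^2
        \<le> (c * norm (fst (fst u) - snd (fst u)))^2 / (c * l)^2"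
      by (intro divide_right_mono) auto
    also have "\<dots> = (norm (fst (fst u) - snd (fst u)))^2 / l^2"
      using c_pos l by (simp add: power_mult_distrib)
    finally
    show "ennreal (exp ((norm (Q (fst (fst u), snd u) - Q (snd (fst u), snd u)))^2 / (c * l)^2))
        \<le> ennreal (exp ((norm (fst (fst u) - snd (fst u)))^2 / l^2))"
      by (simp add: ennreal_leI)
  qed
  also have "\<dots> = (\<integral>\<^sup>+ p. (\<integral>\<^sup>+ v. ennreal (exp ((norm (fst p - snd p))^2 / l^2))
      \<partial>(std_gauss :: 'a measure)) \<partial>\<gamma>)"
  proof -
    have "(\<lambda>u. ennreal (exp ((norm (fst (fst u) - snd (fst u)))^2 / l^2)))
        \<in> borel_measurable (\<gamma> \<Otimes>\<^sub>M (std_gauss :: 'a measure))"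
      by (subst measurable_cong_sets[OF s' refl]) measurable
    from sigma_finite_measure.nn_integral_fst[OF prob_space_imp_sigma_finite[OF prob_space_std_gauss] this]
    show ?thesis by simp
  qed
  also have "\<dots> = (\<integral>\<^sup>+ w. ennreal (exp ((norm (fst w - snd w))^2 / l^2)) \<partial>\<gamma>)"
    by (simp add: prob_space.emeasure_space_1[OF prob_space_std_gauss])
  finally show ?thesis .
qed

lemma psi_norm_sync_coupling_le:
  assumes "sets \<gamma> = sets (borel \<Otimes>\<^sub>M borel)"
  shows "psi_norm (sync_coupling \<gamma>) (\<lambda>(x, y). x - y) \<le> ereal c * psi_norm \<gamma> (\<lambda>(x, y). x - y)"
  using nn_integral_sync_coupling_le[OF assms] by (intro psi_norm_le_cmult[OF c_pos]) (force simp: split_beta')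

lemma W_psi_kernel_le: "W_psi (kernel \<mu>) (kernel \<pi>) \<le> ereal c * W_psi \<mu> \<pi>"
proof -
  let ?\<psi> = "\<lambda>\<gamma>. psi_norm \<gamma> (\<lambda>(x, y). x - y)"
  have "W_psi (kernel \<mu>) (kernel \<pi>) \<le> Inf {ereal c * x | x. x \<in> ?\<psi> ` couplings \<mu> \<pi>}"
  proof (rule Inf_greatest)
    fix y assume "y \<in> {ereal c * x | x. x \<in> ?\<psi> ` couplings \<mu> \<pi>}"
    then obtain \<gamma> where y: "y = ereal c * ?\<psi> \<gamma>" and \<gamma>: "\<gamma> \<in> couplings \<mu> \<pi>" by auto
    have "W_psi (kernel \<mu>) (kernel \<pi>) \<le> ?\<psi> (sync_coupling \<gamma>)"
      unfolding W_psi_def by (rule INF_lower[OF sync_coupling_couplings[OF \<gamma>]])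
    also have "\<dots> \<le> y"
      unfolding y using \<gamma> by (intro psi_norm_sync_coupling_le) (simp add: couplings_def)
    finally show "W_psi (kernel \<mu>) (kernel \<pi>) \<le> y" .
  qed
  also have "\<dots> = ereal c * W_psi \<mu> \<pi>"
    unfolding W_psi_def using ereal_Inf_cmult[OF c_pos, of "\<lambda>x. x \<in> ?\<psi> ` couplings \<mu> \<pi>"] by simp
  finally show ?thesis .
qed

lemma W_psi_kernel_iterate_le:
  "W_psi ((kernel ^^ k) \<mu>) ((kernel ^^ k) \<pi>) \<le> ereal (c ^ k) * W_psi \<mu> \<pi>"
proof (induction k)
  case 0
  then show ?case by simp
next
  case (Suc k)
  have "W_psi ((kernel ^^ Suc k) \<mu>) ((kernel ^^ Suc k) \<pi>) \<le> ereal c * W_psi ((kernel ^^ k) \<mu>) ((kernel ^^ k) \<pi>)"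
    by (simp add: W_psi_kernel_le)
  also have "\<dots> \<le> ereal c * (ereal (c ^ k) * W_psi \<mu> \<pi>)"
    by (rule ereal_mult_left_mono[OF Suc.IH]) (use c_pos in simp)
  also have "\<dots> = ereal (c ^ Suc k) * W_psi \<mu> \<pi>"
    by (simp add: mult.assoc[symmetric])
  finally show ?case .
qed

end

theorem proposition3:
  fixes f :: "'a::euclidean_space \<Rightarrow> real"
    and grad :: "'a \<Rightarrow> 'a"
    and H :: "'a \<Rightarrow> 'a \<Rightarrow>\<^sub>L 'a"
    and \<mu> \<pi> :: "'a measure"
    and L \<alpha> T h :: real
    and k :: nat
  assumes min0: "f 0 = 0" "\<And>x. f 0 \<le> f x"
    and grad: "\<And>x. (f has_derivative (\<lambda>u. grad x \<bullet> u)) (at x)"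
    and hess: "\<And>x. (grad has_derivative blinfun_apply (H x)) (at x)"
    and hess_cont: "continuous_on UNIV H"
    and hess_bound: "\<And>x. norm (H x) \<le> L"
    and strong: "\<alpha> > 0" "\<And>x u. \<alpha> * (norm u)^2 \<le> u \<bullet> blinfun_apply (H x) u"
    and \<mu>: "prob_space \<mu>" "sets \<mu> = sets borel"
    and \<pi>: "prob_space \<pi>" "sets \<pi> = sets borel"
    and T: "T > 0" "L * T^2 \<le> 1/20"
    and h: "h \<ge> 0" "h > 0 \<Longrightarrow> (\<exists>N::nat. T = real N * h)"
  shows "W_psi ((P_th grad T h ^^ k) \<mu>) ((P_th grad T h ^^ k) \<pi>)
           \<le> ereal ((1 - \<alpha> * T^2 / 10) ^ k) * W_psi \<mu> \<pi>"
proof -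
  interpret smooth_strongly_convex f grad H L \<alpha>
    by unfold_locales (use grad hess hess_bound strong in auto)
  define c where "c = 1 - \<alpha> * T^2 / 10"
  have "0 < c"
    using contraction_factor_bounds[OF T(2)] by (simp add: c_def)
  then interpret gaussian_kernel_contraction "\<lambda>(x, v). q_th grad T h x v" c
  proof unfold_locales
    show "(\<lambda>(x, v). q_th grad T h x v) \<in> borel_measurable (borel \<Otimes>\<^sub>M borel)"
      by (rule borel_measurable_q_th[OF T(1)])
    show "norm ((\<lambda>(x, v). q_th grad T h x v) (x, v) - (\<lambda>(x, v). q_th grad T h x v) (y, v))
        \<le> c * norm (x - y)" for x y v
      using q_th_contraction[OF T h] by (simp add: c_def)
  qed
  have "P_th grad T h = kernel"
    by (simp add: fun_eq_iff P_th_def kernel_def)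
  then show ?thesis
    using W_psi_kernel_iterate_le by (simp add: c_def)
qed

end
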